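(* Let $\{G_i,f_i\}_{i=1}^\infty$ be a uniform tower such that $G_i$ is $d_i$-regular for each $i\in\mathbb{N}$. Then $\{A(G_i)/d_i\}_{i=1}^\infty$ is an action convergent sequence of $P$-operators and $\lim_{i\to\infty}d_M(A(G_i)/d_i,A)=0$, where $A$ is the inverse limit of the tower.
   Context: For a finite graph $G$ on $[n]$, $A(G)$ is the operator on functions $v:[n]\to\mathbb{R}$ (with the uniform probability measure on $[n]$) given by $(vA(G))(i)=\sum_{(j,i)\in E(G)}v(j)$. A map $f:V(G_2)\to V(G_1)$ between finite graphs is $(a,b)$-uniform if it is a graph homomorphism, $|f^{-1}(v)|=a$ for every $v\in V(G_1)$, and for every $v\in V(G_2)$ and every neighbor $w$ of $f(v)$ exactly $b$ neighbors of $v$ are mapped to $w$. A uniform tower is a sequence of finite graphs $G_i$ with maps $f_i:V(G_{i+1})\to V(G_i)$ that are $(a_i,b_i)$-uniform. Let $V$ be the inverse limit of $(V(G_i),f_i)$ (sequences $(x_1,x_2,\dots)$ with $f_i(x_{i+1})=x_i$), $\pi_i:V\to V(G_i)$ the projections, and $\mu$ the unique Borel probability measure on $V$ whose pushforward under each $\pi_i$ is uniform. For $x\in V$ let $N(x)\subseteq V$ be the inverse limit of the neighbor sets of $\pi_i(x)$ in $G_i$ and $\nu_x$ the uniform measure on $N(x)$. The inverse limit of the tower is the operator $A$ on $L^\infty(V,\mu)$ given by $(fA)(x)=\int_Vf\,d\nu_x$. For an operator $B$ on a probability space $\Omega$, $\mathcal{S}_k(B)$ is the set of joint distributions on $\mathbb{R}^{2k}$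 of $(v_1,\dots,v_k,v_1B,\dots,v_kB)$ with $v_i$ measurable $\Omega\to[-1,1]$; $d_M(B,C)=\sum_k2^{-k}d_H(\mathcal{S}_k(B),\mathcal{S}_k(C))$ with $d_H$ the Hausdorff distance induced by the Lévy–Prokhorov metric; action convergence means each $\{\mathcal{S}_k\}$ is $d_H$-Cauchy. *)

theory Defs
  imports "HOL-Probability.Probability"
begin

definition fin_graph :: "nat \<Rightarrow> (nat \<Rightarrow> nat \<Rightarrow> bool) \<Rightarrow> bool" where
  "fin_graph n E \<longleftrightarrow> (\<forall>i j. E i j \<longrightarrow> i < n \<and> j < n) \<and> (\<forall>i j. E i j \<longrightarrow> E j i) \<and> (\<forall>i. \<not> E i i)"

definition nbrs :: "nat \<Rightarrow> (nat \<Rightarrow> nat \<Rightarrow> bool) \<Rightarrow> nat \<Rightarrow> nat set" where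
  "nbrs n E v = {w. w < n \<and> E v w}"

definition regular :: "nat \<Rightarrow> (nat \<Rightarrow> nat \<Rightarrow> bool) \<Rightarrow> nat \<Rightarrow> bool" where
  "regular n E d \<longleftrightarrow> (\<forall>v<n. card (nbrs n E v) = d)"

definition uniform_map ::
  "nat \<Rightarrow> (nat \<Rightarrow> nat \<Rightarrow> bool) \<Rightarrow> nat \<Rightarrow> (nat \<Rightarrow> nat \<Rightarrow> bool) \<Rightarrow> (nat \<Rightarrow> nat) \<Rightarrow> nat \<Rightarrow> nat \<Rightarrow> bool" where
  "uniform_map n1 E1 n2 E2 f a b \<longleftrightarrow>
     (\<forall>v<n2. f v < n1) \<and>
     (\<forall>v w. E2 v w \<longrightarrow> E1 (f v) (f w)) \<and>
     (\<forall>v<n1. card {u. u < n2 \<and> f u = v} = a) \<and>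
     (\<forall>v<n2. \<forall>w \<in> nbrs n1 E1 (f v). card {u \<in> nbrs n2 E2 v. f u = w} = b)"

text \<open>Normalised adjacency operator A(G)/d: (v A(G))(i) = sum over edges (j,i) of v(j).\<close>
definition adj_op :: "nat \<Rightarrow> (nat \<Rightarrow> nat \<Rightarrow> bool) \<Rightarrow> nat \<Rightarrow> (nat \<Rightarrow> real) \<Rightarrow> (nat \<Rightarrow> real)" where
  "adj_op n E d v = (\<lambda>i. (\<Sum>j\<in>{j. j < n \<and> E j i}. v j) / real d)"

definition inv_limit :: "(nat \<Rightarrow> nat) \<Rightarrow> (nat \<Rightarrow> nat \<Rightarrow> nat) \<Rightarrow> (nat \<Rightarrow> nat) set" where
  "inv_limit n f = {x. \<forall>i. x i < n i \<and> f i (x (Suc i)) = x i}"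

definition inv_limit_nbrs ::
  "(nat \<Rightarrow> nat) \<Rightarrow> (nat \<Rightarrow> nat \<Rightarrow> nat \<Rightarrow> bool) \<Rightarrow> (nat \<Rightarrow> nat \<Rightarrow> nat) \<Rightarrow> (nat \<Rightarrow> nat) \<Rightarrow> (nat \<Rightarrow> nat) set" where
  "inv_limit_nbrs n E f x = {y \<in> inv_limit n f. \<forall>i. y i \<in> nbrs (n i) (E i) (x i)}"

text \<open>Borel sigma-algebra of V (product topology of discrete spaces, restricted to V).\<close>
definition inv_limit_borel :: "(nat \<Rightarrow> nat) \<Rightarrow> (nat \<Rightarrow> nat \<Rightarrow> nat) \<Rightarrow> (nat \<Rightarrow> nat) measure" where
  "inv_limit_borel n f = restrict_space borel (inv_limit n f)"

definition tower_op :: "((nat \<Rightarrow> nat) \<Rightarrow> (nat \<Rightarrow> nat) measure) \<Rightarrow> ((nat \<Rightarrow> nat) \<Rightarrow> real) \<Rightarrow> ((nat \<Rightarrow> nat) \<Rightarrow> real)" where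
  "tower_op \<nu> g = (\<lambda>x. \<integral>y. g y \<partial>(\<nu> x))"

definition bounded_meas :: "'a measure \<Rightarrow> ('a \<Rightarrow> real) \<Rightarrow> bool" where
  "bounded_meas M g \<longleftrightarrow> g \<in> borel_measurable M \<and> (\<exists>c. \<forall>x\<in>space M. \<bar>g x\<bar> \<le> c)"

definition P_operator :: "'a measure \<Rightarrow> (('a \<Rightarrow> real) \<Rightarrow> ('a \<Rightarrow> real)) \<Rightarrow> bool" where
  "P_operator M B \<longleftrightarrow>
     (\<forall>g h (a::real) b. bounded_meas M g \<longrightarrow> bounded_meas M h \<longrightarrow>
        (AE x in M. B (\<lambda>y. a * g y + b * h y) x = a * B g x + b * B h x)) \<and>
     (\<exists>C. \<forall>g. bounded_meas M g \<longrightarrow> (\<forall>x\<in>space M. \<bar>g x\<bar> \<le> 1) \<longrightarrow>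
        integrable M (B g) \<and> (\<integral>x. \<bar>B g x\<bar> \<partial>M) \<le> C)"

text \<open>Borel measurable space of R^(2k), realised as extensional functions on {..<2k}.\<close>
definition Rspace :: "nat \<Rightarrow> (nat \<Rightarrow> real) measure" where
  "Rspace k = PiM {..<2*k} (\<lambda>_. borel)"

definition S_k :: "'a measure \<Rightarrow> (('a \<Rightarrow> real) \<Rightarrow> ('a \<Rightarrow> real)) \<Rightarrow> nat \<Rightarrow> (nat \<Rightarrow> real) measure set" where
  "S_k M B k = {distr M (Rspace k)
       (\<lambda>x. \<lambda>j\<in>{..<2*k}. if j < k then v j x else B (v (j - k)) x) | v.
       \<forall>j<k. v j \<in> borel_measurable M \<and> (\<forall>x\<in>space M. -1 \<le> v j x \<and> v j x \<le> 1)}"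

definition edist :: "nat \<Rightarrow> (nat \<Rightarrow> real) \<Rightarrow> (nat \<Rightarrow> real) \<Rightarrow> real" where
  "edist k x y = sqrt (\<Sum>j<2*k. (x j - y j)\<^sup>2)"

definition eps_nbhd :: "nat \<Rightarrow> (nat \<Rightarrow> real) set \<Rightarrow> real \<Rightarrow> (nat \<Rightarrow> real) set" where
  "eps_nbhd k U e = {y \<in> space (Rspace k). \<exists>x\<in>U. edist k x y < e}"

definition LP_dist :: "nat \<Rightarrow> (nat \<Rightarrow> real) measure \<Rightarrow> (nat \<Rightarrow> real) measure \<Rightarrow> real" where
  "LP_dist k P Q = Inf {e. e > 0 \<and> (\<forall>U \<in> sets (Rspace k).
       measure P U \<le> measure Q (eps_nbhd k U e) + e \<and>
       measure Q U \<le> measure P (eps_nbhd k U e) + e)}"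

definition haus_LP :: "nat \<Rightarrow> (nat \<Rightarrow> real) measure set \<Rightarrow> (nat \<Rightarrow> real) measure set \<Rightarrow> real" where
  "haus_LP k X Y = max (SUP P\<in>X. INF Q\<in>Y. LP_dist k P Q) (SUP Q\<in>Y. INF P\<in>X. LP_dist k P Q)"

definition d_M :: "'a measure \<Rightarrow> (('a \<Rightarrow> real) \<Rightarrow> ('a \<Rightarrow> real)) \<Rightarrow>
                   'b measure \<Rightarrow> (('b \<Rightarrow> real) \<Rightarrow> ('b \<Rightarrow> real)) \<Rightarrow> real" where
  "d_M M B N C = (\<Sum>k. (1/2) ^ Suc k * haus_LP (Suc k) (S_k M B (Suc k)) (S_k N C (Suc k)))"

definition action_convergent :: "(nat \<Rightarrow> 'a measure) \<Rightarrow> (nat \<Rightarrow> (('a \<Rightarrow> real) \<Rightarrow> ('a \<Rightarrow> real))) \<Rightarrow> bool" where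
  "action_convergent M B \<longleftrightarrow>
     (\<forall>k\<ge>1. \<forall>e>0. \<exists>N. \<forall>p\<ge>N. \<forall>q\<ge>N. haus_LP k (S_k (M p) (B p) k) (S_k (M q) (B q) k) < e)"

end

(* The limit measure mu is stationary for the neighbour kernel nu: on a cylinder set of level i
   this is the double-counting identity  sum_c |T \<inter> N(c)| = d |T|  in the d-regular graph G_i.
   Hence the limit operator A is a contraction of L^1(mu), and on functions of the i-th coordinate it
   acts as A(G_i)/d_i, so every k-profile of A(G_i)/d_i is a k-profile of A.  Conversely, every
   measurable function into [-1,1] is L^1-close to functions of the i-th coordinate for all large i,
   and L^1-closeness of test functions bounds the Levy--Prokhorov distance of the profiles via
   Markov's inequality.  Since the probability measures on the cube [-1,1]^2k are totally bounded
   for that distance, the approximation is uniform over S_k(A); thus the Hausdorff distance between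
   S_k(A(G_i)/d_i) and S_k(A) tends to 0, which gives action convergence and, by Tannery's theorem,
   d_M tends to 0. *)

theory Submission
  imports Defs
begin

section \<open>The Euclidean distance on \<open>\<real>\<^sup>2\<^sup>k\<close>\<close>

lemma edist_eq_L2_set: "edist k x y = L2_set (\<lambda>j. x j - y j) {..<2*k}"
  unfolding edist_def L2_set_def ..

lemma edist_nonneg: "0 \<le> edist k x y"
  unfolding edist_eq_L2_set by simp

lemma edist_commute: "edist k x y = edist k y x"
  unfolding edist_def by (simp add: power2_commute)

lemma edist_self: "edist k x x = 0"
  unfolding edist_def by simp

lemma edist_triangle: "edist k x z \<le> edist k x y + edist k y z"
proof -
  have "edist k x z = L2_set (\<lambda>j. (x j - y j) + (y j - z j)) {..<2*k}"
    unfolding edist_eq_L2_set by simp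
  also have "\<dots> \<le> edist k x y + edist k y z"
    unfolding edist_eq_L2_set by (rule L2_set_triangle_ineq)
  finally show ?thesis .
qed

lemma edist_le_sum_abs: "edist k x y \<le> (\<Sum>j<2*k. \<bar>x j - y j\<bar>)"
  unfolding edist_eq_L2_set by (rule L2_set_le_sum_abs)

lemma space_Rspace: "space (Rspace k) = (\<Pi>\<^sub>E j\<in>{..<2*k}. UNIV)"
  unfolding Rspace_def by (simp add: space_PiM)

lemma measurable_Rspace_component:
  "F \<in> measurable M (Rspace k) \<Longrightarrow> j < 2 * k \<Longrightarrow> (\<lambda>x. F x j) \<in> borel_measurable M"
  unfolding Rspace_def by (rule measurable_compose[OF _ measurable_component_singleton]) auto

lemma borel_measurable_edist:
  assumes F: "F \<in> measurable M (Rspace k)" and G: "G \<in> measurable M (Rspace k)"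
  shows "(\<lambda>x. edist k (F x) (G x)) \<in> borel_measurable M"
proof -
  have "(\<lambda>x. \<Sum>j<2*k. (F x j - G x j)\<^sup>2) \<in> borel_measurable M"
    by (intro borel_measurable_sum borel_measurable_power borel_measurable_diff
        measurable_Rspace_component[OF F] measurable_Rspace_component[OF G]) auto
  then show ?thesis unfolding edist_def
    by (rule measurable_compose[OF _ borel_measurable_sqrt])
qed

lemma eps_nbhd_superset: "U \<subseteq> space (Rspace k) \<Longrightarrow> 0 < e \<Longrightarrow> U \<subseteq> eps_nbhd k U e"
  unfolding eps_nbhd_def by (auto intro!: bexI simp: edist_self)

lemma eps_nbhd_mono: "e1 \<le> e2 \<Longrightarrow> eps_nbhd k U e1 \<subseteq> eps_nbhd k U e2"
  unfolding eps_nbhd_def by (auto intro: less_le_trans)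

lemma eps_nbhd_eps_nbhd: "eps_nbhd k (eps_nbhd k U e1) e2 \<subseteq> eps_nbhd k U (e1 + e2)"
  unfolding eps_nbhd_def using edist_triangle by (smt (verit) mem_Collect_eq subsetI)

definition rat_points :: "nat \<Rightarrow> (nat \<Rightarrow> real) set" where
  "rat_points k = (\<lambda>q. \<lambda>j\<in>{..<2*k}. of_rat (q j)) ` (\<Pi>\<^sub>E j\<in>{..<2*k}. UNIV)"

lemma countable_rat_points: "countable (rat_points k)"
  unfolding rat_points_def by (intro countable_image countable_PiE) auto

lemma rat_points_dense:
  assumes y: "y \<in> space (Rspace k)" and \<delta>: "0 < \<delta>"
  shows "\<exists>r\<in>rat_points k. edist k r y < \<delta>"
proof -
  define t where "t = \<delta> / (2 * real k + 1)"
  have t: "0 < t" unfolding t_def using \<delta> by simp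
  have "\<forall>j. \<exists>q::rat. y j - t < of_rat q \<and> of_rat q < y j + t"
    using t by (intro allI of_rat_dense) simp
  then obtain q where q: "\<And>j. y j - t < of_rat (q j) \<and> of_rat (q j) < y j + t" by metis
  define r where "r = (\<lambda>j\<in>{..<2*k}. of_rat (q j) :: real)"
  have "r \<in> rat_points k" unfolding rat_points_def r_def
    by (rule image_eqI[where x="restrict q {..<2*k}"]) auto
  moreover have "edist k r y < \<delta>"
  proof -
    have "edist k r y \<le> (\<Sum>j<2*k. \<bar>r j - y j\<bar>)" by (rule edist_le_sum_abs)
    also have "\<dots> \<le> (\<Sum>j<2*k. t)"
    proof (rule sum_mono)
      fix j assume "j \<in> {..<2*k}"
      then show "\<bar>r j - y j\<bar> \<le> t" using q[of j] by (simp add: r_def abs_le_iff)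
    qed
    also have "\<dots> < \<delta>" unfolding t_def using \<delta> by (simp add: field_simps)
    finally show ?thesis .
  qed
  ultimately show ?thesis by blast
qed

definition rat_ball :: "nat \<Rightarrow> (nat \<Rightarrow> real) \<Rightarrow> rat \<Rightarrow> (nat \<Rightarrow> real) set" where
  "rat_ball k r q = {y \<in> space (Rspace k). edist k r y < of_rat q}"

lemma rat_ball_in_sets: "r \<in> rat_points k \<Longrightarrow> rat_ball k r q \<in> sets (Rspace k)"
proof -
  assume "r \<in> rat_points k"
  then have "r \<in> space (Rspace k)" unfolding rat_points_def space_Rspace by auto
  then have "(\<lambda>y. edist k r y) \<in> borel_measurable (Rspace k)"
    by (intro borel_measurable_edist measurable_const measurable_ident_sets) auto
  then show ?thesis unfolding rat_ball_def by measurable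
qed

lemma eps_nbhd_eq_UN_rat_balls:
  "eps_nbhd k U e = (\<Union>(r, q)\<in>{(r, q) \<in> rat_points k \<times> UNIV. rat_ball k r q \<subseteq> eps_nbhd k U e}. rat_ball k r q)"
  (is "_ = (\<Union>(r, q)\<in>?I. _)")
proof (intro equalityI subsetI)
  fix y assume "y \<in> eps_nbhd k U e"
  then obtain x where y: "y \<in> space (Rspace k)" and x: "x \<in> U" "edist k x y < e"
    unfolding eps_nbhd_def by auto
  define t where "t = e - edist k x y"
  have t: "0 < t" unfolding t_def using x by simp
  obtain r where r: "r \<in> rat_points k" "edist k r y < t / 3"
    using rat_points_dense[OF y, of "t/3"] t by auto
  obtain q :: rat where q: "t / 3 < of_rat q" "of_rat q < 2 * t / 3"
    using of_rat_dense[of "t/3" "2*t/3"] t by auto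
  have "rat_ball k r q \<subseteq> eps_nbhd k U e"
  proof
    fix z assume "z \<in> rat_ball k r q"
    then have z: "z \<in> space (Rspace k)" "edist k r z < of_rat q" unfolding rat_ball_def by auto
    have "edist k x z \<le> edist k x y + edist k y r + edist k r z"
      using edist_triangle[where k=k and x=x and y=y and z=z] edist_triangle[where k=k and x=y and y=r and z=z]
      by linarith
    then have "edist k x z < e" using r z q edist_commute[of k y r] unfolding t_def by simp
    then show "z \<in> eps_nbhd k U e" unfolding eps_nbhd_def using z x by blast
  qed
  moreover have "y \<in> rat_ball k r q"
    unfolding rat_ball_def using y r q by simp
  ultimately show "y \<in> (\<Union>(r, q)\<in>?I. rat_ball k r q)" using r by blast
qed auto

lemma eps_nbhd_in_sets: "eps_nbhd k U e \<in> sets (Rspace k)"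
proof -
  have "countable (rat_points k \<times> (UNIV :: rat set))"
    using countable_rat_points by (intro countable_SIGMA) auto
  then have "countable {(r, q) \<in> rat_points k \<times> UNIV. rat_ball k r q \<subseteq> eps_nbhd k U e}"
    by (rule countable_subset[rotated]) auto
  then show ?thesis
    by (subst eps_nbhd_eq_UN_rat_balls, intro sets.countable_UN'') (auto intro: rat_ball_in_sets)
qed

section \<open>The Levy--Prokhorov distance\<close>

definition Rprob :: "nat \<Rightarrow> (nat \<Rightarrow> real) measure \<Rightarrow> bool" where
  "Rprob k P \<longleftrightarrow> prob_space P \<and> sets P = sets (Rspace k)"

definition LP_close :: "nat \<Rightarrow> (nat \<Rightarrow> real) measure \<Rightarrow> (nat \<Rightarrow> real) measure \<Rightarrow> real \<Rightarrow> bool" where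
  "LP_close k P Q e \<longleftrightarrow> (\<forall>U \<in> sets (Rspace k).
       measure P U \<le> measure Q (eps_nbhd k U e) + e \<and>
       measure Q U \<le> measure P (eps_nbhd k U e) + e)"

lemma LP_dist_eq_Inf_LP_close: "LP_dist k P Q = Inf {e. e > 0 \<and> LP_close k P Q e}"
  unfolding LP_dist_def LP_close_def ..

lemma Rprob_distr: "prob_space M \<Longrightarrow> F \<in> measurable M (Rspace k) \<Longrightarrow> Rprob k (distr M (Rspace k) F)"
  unfolding Rprob_def by (auto intro: prob_space.prob_space_distr)

lemma Rprob_space: "Rprob k P \<Longrightarrow> space P = space (Rspace k)"
  unfolding Rprob_def by (metis sets_eq_imp_space_eq)

lemma Rprob_measure_mono:
  "Rprob k P \<Longrightarrow> A \<subseteq> B \<Longrightarrow> B \<in> sets (Rspace k) \<Longrightarrow> measure P A \<le> measure P B"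
  unfolding Rprob_def by (intro finite_measure.finite_measure_mono) (auto simp: prob_space_def)

lemma Rprob_measure_le_1: "Rprob k P \<Longrightarrow> measure P A \<le> 1"
  unfolding Rprob_def by (metis prob_space.prob_le_1 measure_notin_sets zero_le_one)

lemma LP_close_commute: "LP_close k P Q e \<longleftrightarrow> LP_close k Q P e"
  unfolding LP_close_def by auto

lemma LP_dist_commute: "LP_dist k P Q = LP_dist k Q P"
  unfolding LP_dist_eq_Inf_LP_close using LP_close_commute by metis

lemma LP_close_mono:
  assumes P: "Rprob k P" and Q: "Rprob k Q" and PQ: "LP_close k P Q e" and "e \<le> e'"
  shows "LP_close k P Q e'"
  unfolding LP_close_def
proof
  fix U assume U: "U \<in> sets (Rspace k)"
  have "measure Q (eps_nbhd k U e) \<le> measure Q (eps_nbhd k U e')"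
    "measure P (eps_nbhd k U e) \<le> measure P (eps_nbhd k U e')"
    using Rprob_measure_mono[OF _ eps_nbhd_mono[OF \<open>e \<le> e'\<close>] eps_nbhd_in_sets] P Q by auto
  then show "measure P U \<le> measure Q (eps_nbhd k U e') + e' \<and> measure Q U \<le> measure P (eps_nbhd k U e') + e'"
    using PQ U \<open>e \<le> e'\<close> unfolding LP_close_def by fastforce
qed

lemma LP_close_ge_1: "Rprob k P \<Longrightarrow> Rprob k Q \<Longrightarrow> 1 \<le> e \<Longrightarrow> LP_close k P Q e"
  unfolding LP_close_def using Rprob_measure_le_1 by (smt (verit) measure_nonneg)

lemma LP_close_set_nonempty: "Rprob k P \<Longrightarrow> Rprob k Q \<Longrightarrow> {e. e > 0 \<and> LP_close k P Q e} \<noteq> {}"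
  using LP_close_ge_1[of k P Q 1] zero_less_one by blast

lemma LP_dist_nonneg: "Rprob k P \<Longrightarrow> Rprob k Q \<Longrightarrow> 0 \<le> LP_dist k P Q"
  unfolding LP_dist_eq_Inf_LP_close by (rule cInf_greatest[OF LP_close_set_nonempty]) auto

lemma LP_dist_le:
  assumes "0 \<le> r" and "\<And>e. r < e \<Longrightarrow> LP_close k P Q e"
  shows "LP_dist k P Q \<le> r"
proof -
  have bdd: "bdd_below {e. e > 0 \<and> LP_close k P Q e}" by (rule bdd_belowI[of _ 0]) auto
  have "LP_dist k P Q \<le> e" if "r < e" for e
    unfolding LP_dist_eq_Inf_LP_close by (rule cInf_lower[OF _ bdd]) (use assms that in auto)
  then show ?thesis by (meson dense not_le)
qed

lemma LP_close_of_LP_dist_less: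
  assumes P: "Rprob k P" and Q: "Rprob k Q" and "LP_dist k P Q < e"
  shows "LP_close k P Q e"
proof -
  obtain e' where "e' \<in> {e. e > 0 \<and> LP_close k P Q e}" "e' < e"
    using cInf_lessD[OF LP_close_set_nonempty[OF P Q]] assms(3) unfolding LP_dist_eq_Inf_LP_close by blast
  then show ?thesis using LP_close_mono[OF P Q] by auto
qed

lemma LP_dist_le_1: "Rprob k P \<Longrightarrow> Rprob k Q \<Longrightarrow> LP_dist k P Q \<le> 1"
  by (rule LP_dist_le) (auto intro: LP_close_ge_1)

lemma LP_dist_self:
  assumes P: "Rprob k P"
  shows "LP_dist k P P = 0"
proof (intro antisym LP_dist_nonneg[OF P P] LP_dist_le)
  fix e :: real assume "0 < e"
  then have "measure P U \<le> measure P (eps_nbhd k U e)" if "U \<in> sets (Rspace k)" for U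
    using that by (intro Rprob_measure_mono[OF P] eps_nbhd_superset eps_nbhd_in_sets sets.sets_into_space)
  then show "LP_close k P P e" unfolding LP_close_def using \<open>0 < e\<close> by force
qed simp

lemma LP_close_trans:
  assumes P: "Rprob k P" and Q: "Rprob k Q" and R: "Rprob k R"
    and PQ: "LP_close k P Q e1" and QR: "LP_close k Q R e2"
  shows "LP_close k P R (e1 + e2)"
proof -
  have one_side: "measure P' U \<le> measure R' (eps_nbhd k U (s + t)) + (s + t)"
    if "Rprob k R'" "U \<in> sets (Rspace k)"
      "\<forall>U \<in> sets (Rspace k). measure P' U \<le> measure Q (eps_nbhd k U s) + s"
      "\<forall>U \<in> sets (Rspace k). measure Q U \<le> measure R' (eps_nbhd k U t) + t"
    for P' R' U s t
  proof -
    have "measure P' U \<le> measure Q (eps_nbhd k U s) + s" using that by blast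
    also have "measure Q (eps_nbhd k U s) \<le> measure R' (eps_nbhd k (eps_nbhd k U s) t) + t"
      using that eps_nbhd_in_sets by blast
    also have "measure R' (eps_nbhd k (eps_nbhd k U s) t) \<le> measure R' (eps_nbhd k U (s + t))"
      by (rule Rprob_measure_mono[OF that(1) eps_nbhd_eps_nbhd eps_nbhd_in_sets])
    finally show ?thesis by simp
  qed
  show ?thesis
    using one_side[where P'=P and R'=R and s=e1 and t=e2] one_side[where P'=R and R'=P and s=e2 and t=e1]
      P R PQ QR
    unfolding LP_close_def by (simp add: add.commute)
qed

lemma LP_dist_triangle:
  assumes P: "Rprob k P" and Q: "Rprob k Q" and R: "Rprob k R"
  shows "LP_dist k P R \<le> LP_dist k P Q + LP_dist k Q R"
proof (rule LP_dist_le)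
  show "0 \<le> LP_dist k P Q + LP_dist k Q R" using LP_dist_nonneg P Q R by (simp add: add_nonneg_nonneg)
  fix e assume e: "LP_dist k P Q + LP_dist k Q R < e"
  define h where "h = (e - (LP_dist k P Q + LP_dist k Q R)) / 2"
  have h: "0 < h" unfolding h_def using e by simp
  have "LP_close k P R ((LP_dist k P Q + h) + (LP_dist k Q R + h))"
    using h by (intro LP_close_trans[OF P Q R] LP_close_of_LP_dist_less) (simp_all add: P Q R)
  then show "LP_close k P R e" unfolding h_def by simp
qed

text \<open>Coupling bound: if two random vectors on the same space have \<open>L\<^sup>1\<close>-distance at most \<open>r\<^sup>2\<close>,
  then by Markov's inequality they differ by at least \<open>e > r\<close> with probability at most \<open>e\<close>.\<close>

lemma measure_distr_le_eps_nbhd_of_L1: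
  assumes M: "prob_space M" and F: "F \<in> measurable M (Rspace k)" and G: "G \<in> measurable M (Rspace k)"
    and int: "integrable M (\<lambda>x. edist k (F x) (G x))"
    and L1: "(\<integral>x. edist k (F x) (G x) \<partial>M) \<le> r\<^sup>2"
    and r: "0 < r" "r < e" and U: "U \<in> sets (Rspace k)"
  shows "measure (distr M (Rspace k) F) U \<le> measure (distr M (Rspace k) G) (eps_nbhd k U e) + e"
proof -
  interpret prob_space M by (rule M)
  let ?B = "{x \<in> space M. e \<le> edist k (F x) (G x)}"
  have B: "?B \<in> sets M" using borel_measurable_edist[OF F G] by measurable
  have GU: "G -` eps_nbhd k U e \<inter> space M \<in> sets M" using measurable_sets[OF G eps_nbhd_in_sets] .
  have "F -` U \<inter> space M \<subseteq> (G -` eps_nbhd k U e \<inter> space M) \<union> ?B"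
    using measurable_space[OF G] unfolding eps_nbhd_def by (auto simp: not_le)
  then have "measure (distr M (Rspace k) F) U \<le> measure M ((G -` eps_nbhd k U e \<inter> space M) \<union> ?B)"
    using GU B by (simp add: measure_distr[OF F U] finite_measure_mono)
  also have "\<dots> \<le> measure (distr M (Rspace k) G) (eps_nbhd k U e) + measure M ?B"
    using measure_Un_le[OF GU B] by (simp add: measure_distr[OF G eps_nbhd_in_sets])
  also have "measure M ?B \<le> (\<integral>x. edist k (F x) (G x) \<partial>M) / e"
    by (rule integral_Markov_inequality_measure[OF int B]) (use r in \<open>auto simp: edist_nonneg\<close>)
  also have "\<dots> \<le> e"
  proof -
    have "r\<^sup>2 \<le> e * e" using r by (simp add: power2_eq_square mult_mono)
    then show ?thesis using r L1 by (simp add: field_simps)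
  qed
  finally show ?thesis by simp
qed

lemma LP_dist_distr_le_of_L1:
  assumes M: "prob_space M" and F: "F \<in> measurable M (Rspace k)" and G: "G \<in> measurable M (Rspace k)"
    and int: "integrable M (\<lambda>x. edist k (F x) (G x))"
    and L1: "(\<integral>x. edist k (F x) (G x) \<partial>M) \<le> r\<^sup>2" and r: "0 < r"
  shows "LP_dist k (distr M (Rspace k) F) (distr M (Rspace k) G) \<le> r"
proof (rule LP_dist_le)
  fix e assume "r < e"
  moreover have "integrable M (\<lambda>x. edist k (G x) (F x))" "(\<integral>x. edist k (G x) (F x) \<partial>M) \<le> r\<^sup>2"
    using int L1 by (simp_all add: edist_commute)
  ultimately show "LP_close k (distr M (Rspace k) F) (distr M (Rspace k) G) e"
    unfolding LP_close_def
    using measure_distr_le_eps_nbhd_of_L1[OF M F G int L1 r] measure_distr_le_eps_nbhd_of_L1[OF M G F] r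
    by blast
qed (use r in simp)

section \<open>Total boundedness on the cube \<open>[-1,1]\<^sup>2\<^sup>k\<close>\<close>

definition cube :: "nat \<Rightarrow> (nat \<Rightarrow> real) set" where
  "cube k = {y \<in> space (Rspace k). \<forall>j<2*k. \<bar>y j\<bar> \<le> 1}"

text \<open>Coordinate \<open>t \<in> [-1,1]\<close> lies in the grid interval \<open>[-1 + c/m, -1 + (c+1)/m]\<close> of
  index \<open>c = grid_coord m t < 2m\<close>.\<close>

definition grid_coord :: "nat \<Rightarrow> real \<Rightarrow> nat" where
  "grid_coord m t = min (2 * m - 1) (nat \<lfloor>(t + 1) * m\<rfloor>)"

definition grid_labels :: "nat \<Rightarrow> nat \<Rightarrow> (nat \<Rightarrow> nat) set" where
  "grid_labels k m = (\<Pi>\<^sub>E j\<in>{..<2*k}. {..<2*m})"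

definition grid_label :: "nat \<Rightarrow> nat \<Rightarrow> (nat \<Rightarrow> real) \<Rightarrow> nat \<Rightarrow> nat" where
  "grid_label k m y = (\<lambda>j\<in>{..<2*k}. grid_coord m (y j))"

definition grid_cell :: "nat \<Rightarrow> nat \<Rightarrow> (nat \<Rightarrow> nat) \<Rightarrow> (nat \<Rightarrow> real) set" where
  "grid_cell k m c = {y \<in> cube k. grid_label k m y = c}"

lemma cube_in_sets: "cube k \<in> sets (Rspace k)"
proof -
  have "{y \<in> space (Rspace k). \<bar>y j\<bar> \<le> 1} \<in> sets (Rspace k)" if "j < 2*k" for j
    using measurable_Rspace_component[OF measurable_ident_sets[OF refl] that] by measurable
  then have "space (Rspace k) \<inter> (\<Inter>j<2*k. {y \<in> space (Rspace k). \<bar>y j\<bar> \<le> 1}) \<in> sets (Rspace k)"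
    by auto
  moreover have "cube k = space (Rspace k) \<inter> (\<Inter>j<2*k. {y \<in> space (Rspace k). \<bar>y j\<bar> \<le> 1})"
    unfolding cube_def by auto
  ultimately show ?thesis by simp
qed

lemma grid_cell_in_sets: "grid_cell k m c \<in> sets (Rspace k)"
proof -
  have "(\<lambda>y. grid_coord m (y j)) \<in> measurable (Rspace k) (count_space UNIV)" if "j < 2*k" for j
    using measurable_Rspace_component[OF measurable_ident_sets[OF refl] that]
    unfolding grid_coord_def by measurable
  then have "{y \<in> space (Rspace k). \<forall>j\<in>{..<2*k}. grid_coord m (y j) = c j} \<in> sets (Rspace k)"
    by (intro sets.sets_Collect_finite_All) (auto intro: measurable_sets_Collect)
  then have "cube k \<inter> {y \<in> space (Rspace k). \<forall>j\<in>{..<2*k}. grid_coord m (y j) = c j} \<in> sets (Rspace k)"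
    using cube_in_sets by blast
  moreover have "grid_cell k m c = (if c \<in> extensional {..<2*k} then
      cube k \<inter> {y \<in> space (Rspace k). \<forall>j\<in>{..<2*k}. grid_coord m (y j) = c j} else {})"
    unfolding grid_cell_def grid_label_def cube_def by (auto simp: restrict_def extensional_def fun_eq_iff)
  ultimately show ?thesis by simp
qed

lemma grid_coord_bounds:
  assumes m: "1 \<le> m" and t: "\<bar>t\<bar> \<le> 1"
  shows "real (grid_coord m t) \<le> (t + 1) * m" "(t + 1) * m \<le> real (grid_coord m t) + 1"
    "grid_coord m t < 2 * m"
proof -
  have "0 \<le> (t + 1) * m" "(t + 1) * m \<le> 2 * m" using t m by (simp_all add: mult_right_mono)
  then show "real (grid_coord m t) \<le> (t + 1) * m" "(t + 1) * m \<le> real (grid_coord m t) + 1"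
    unfolding grid_coord_def using m by (auto simp: min_def of_nat_diff) linarith+
  show "grid_coord m t < 2 * m" unfolding grid_coord_def using m by simp
qed

lemma finite_grid_labels: "finite (grid_labels k m)"
  unfolding grid_labels_def by (intro finite_PiE) auto

lemma cube_in_grid_cell:
  assumes "1 \<le> m" and "y \<in> cube k"
  shows "grid_label k m y \<in> grid_labels k m" "y \<in> grid_cell k m (grid_label k m y)"
  using grid_coord_bounds(3)[OF assms(1)] assms(2)
  unfolding grid_labels_def grid_label_def grid_cell_def cube_def by auto

lemma grid_cell_subset_cube: "grid_cell k m c \<subseteq> cube k"
  unfolding grid_cell_def by auto

lemma disjoint_grid_cells: "disjoint_family (grid_cell k m)"
  unfolding disjoint_family_on_def grid_cell_def by auto

lemma edist_grid_cell_le: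
  assumes m: "1 \<le> m" and x: "x \<in> grid_cell k m c" and y: "y \<in> grid_cell k m c"
  shows "edist k x y \<le> real (2 * k) / real m"
proof -
  have coord: "\<bar>x j - y j\<bar> \<le> 1 / real m" if j: "j < 2 * k" for j
  proof -
    have xj: "\<bar>x j\<bar> \<le> 1" and yj: "\<bar>y j\<bar> \<le> 1" using x y j unfolding grid_cell_def cube_def by auto
    have "grid_label k m x j = grid_label k m y j" using x y unfolding grid_cell_def by simp
    then have "grid_coord m (x j) = grid_coord m (y j)" using j by (simp add: grid_label_def)
    then have "\<bar>(x j + 1) * m - (y j + 1) * m\<bar> \<le> 1"
      using grid_coord_bounds(1,2)[OF m xj] grid_coord_bounds(1,2)[OF m yj] by linarith
    moreover have "(x j + 1) * m - (y j + 1) * m = (x j - y j) * m" by (simp add: algebra_simps)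
    ultimately have "\<bar>x j - y j\<bar> * m \<le> 1" by (simp add: abs_mult)
    then show ?thesis using m by (simp add: field_simps)
  qed
  have "edist k x y \<le> (\<Sum>j<2*k. \<bar>x j - y j\<bar>)" by (rule edist_le_sum_abs)
  also have "\<dots> \<le> (\<Sum>j<2*k. 1 / real m)" by (rule sum_mono) (simp add: coord)
  also have "\<dots> = real (2 * k) / real m" by simp
  finally show ?thesis .
qed

lemma subset_grid_cells_meeting:
  assumes "1 \<le> m" "U \<subseteq> space (Rspace k)"
  shows "U \<subseteq> (\<Union>c\<in>{c \<in> grid_labels k m. grid_cell k m c \<inter> U \<noteq> {}}. grid_cell k m c) \<union> (space (Rspace k) - cube k)"
proof
  fix y assume y: "y \<in> U"
  show "y \<in> (\<Union>c\<in>{c \<in> grid_labels k m. grid_cell k m c \<inter> U \<noteq> {}}. grid_cell k m c) \<union> (space (Rspace k) - cube k)"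
  proof (cases "y \<in> cube k")
    case True
    note cell = cube_in_grid_cell[OF assms(1) True]
    have "grid_label k m y \<in> {c \<in> grid_labels k m. grid_cell k m c \<inter> U \<noteq> {}}"
      using cell y by auto
    with cell(2) show ?thesis by (intro UnI1 UN_I)
  qed (use y assms(2) in auto)
qed

lemma grid_cells_meeting_subset_eps_nbhd:
  assumes "1 \<le> m" and "real (2 * k) / real m < e"
  shows "(\<Union>c\<in>{c \<in> grid_labels k m. grid_cell k m c \<inter> U \<noteq> {}}. grid_cell k m c) \<subseteq> eps_nbhd k U e"
proof
  fix y assume "y \<in> (\<Union>c\<in>{c \<in> grid_labels k m. grid_cell k m c \<inter> U \<noteq> {}}. grid_cell k m c)"
  then obtain c x where y: "y \<in> grid_cell k m c" and x: "x \<in> grid_cell k m c" "x \<in> U" by blast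
  have "edist k x y \<le> real (2 * k) / real m" by (rule edist_grid_cell_le[OF assms(1) x(1) y])
  then have "edist k x y < e" using assms(2) by linarith
  moreover have "y \<in> space (Rspace k)" using y grid_cell_subset_cube[of k m c] unfolding cube_def by auto
  ultimately show "y \<in> eps_nbhd k U e" unfolding eps_nbhd_def using x(2) by auto
qed

lemma measure_le_sum_grid_cells_meeting:
  assumes P: "Rprob k P" and P_cube: "measure P (cube k) = 1" and m: "1 \<le> m" and U: "U \<in> sets (Rspace k)"
  shows "measure P U \<le> (\<Sum>c\<in>{c \<in> grid_labels k m. grid_cell k m c \<inter> U \<noteq> {}}. measure P (grid_cell k m c))"
proof -
  interpret prob_space P using P unfolding Rprob_def by blast
  have sets_P: "sets P = sets (Rspace k)" using P unfolding Rprob_def by auto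
  define I where "I = {c \<in> grid_labels k m. grid_cell k m c \<inter> U \<noteq> {}}"
  define W where "W = (\<Union>c\<in>I. grid_cell k m c)"
  have I: "finite I" unfolding I_def using finite_grid_labels by auto
  have W: "W \<in> sets (Rspace k)" unfolding W_def using I grid_cell_in_sets by auto
  have outside: "measure P (space (Rspace k) - cube k) = 0"
    using prob_compl[of "cube k"] P_cube Rprob_space[OF P] sets_P cube_in_sets by simp
  have "U \<subseteq> W \<union> (space (Rspace k) - cube k)"
    using subset_grid_cells_meeting[OF m sets.sets_into_space[OF U]] by (simp only: W_def I_def)
  then have "measure P U \<le> measure P (W \<union> (space (Rspace k) - cube k))"
    by (rule finite_measure_mono) (use sets_P W cube_in_sets in auto)
  also have "\<dots> \<le> measure P W"
    using measure_Un_le[of W P "space (Rspace k) - cube k"] outside sets_P W cube_in_sets by simp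
  also have "\<dots> \<le> (\<Sum>c\<in>I. measure P (grid_cell k m c))"
    unfolding W_def using sets_P grid_cell_in_sets by (intro measure_UNION_le I) auto
  finally show ?thesis unfolding I_def .
qed

lemma sum_grid_cells_meeting_le_eps_nbhd:
  assumes Q: "Rprob k Q" and m: "1 \<le> m" and mesh: "real (2 * k) / real m < e"
  shows "(\<Sum>c\<in>{c \<in> grid_labels k m. grid_cell k m c \<inter> U \<noteq> {}}. measure Q (grid_cell k m c))
      \<le> measure Q (eps_nbhd k U e)"
proof -
  interpret prob_space Q using Q unfolding Rprob_def by blast
  have sets_Q: "sets Q = sets (Rspace k)" using Q unfolding Rprob_def by auto
  define I where "I = {c \<in> grid_labels k m. grid_cell k m c \<inter> U \<noteq> {}}"
  have I: "finite I" unfolding I_def using finite_grid_labels by auto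
  have "(\<Sum>c\<in>I. measure Q (grid_cell k m c)) = measure Q (\<Union>c\<in>I. grid_cell k m c)"
  proof (rule finite_measure_finite_Union[symmetric, OF I])
    show "grid_cell k m ` I \<subseteq> sets Q" using sets_Q grid_cell_in_sets by auto
    show "disjoint_family_on (grid_cell k m) I"
      by (rule disjoint_family_on_mono[OF subset_UNIV disjoint_grid_cells])
  qed
  also have "\<dots> \<le> measure Q (eps_nbhd k U e)"
    unfolding I_def using sets_Q eps_nbhd_in_sets
    by (intro finite_measure_mono grid_cells_meeting_subset_eps_nbhd[OF m mesh]) auto
  finally show ?thesis unfolding I_def .
qed

lemma measure_le_eps_nbhd_of_grid_cells:
  fixes \<eta> e :: real
  assumes P: "Rprob k P" and Q: "Rprob k Q" and P_cube: "measure P (cube k) = 1" and m: "1 \<le> m"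
    and cells: "\<And>c. c \<in> grid_labels k m \<Longrightarrow> measure P (grid_cell k m c) \<le> measure Q (grid_cell k m c) + \<eta>"
    and "0 \<le> \<eta>" and mesh: "real (2 * k) / real m < e" and card: "real (card (grid_labels k m)) * \<eta> \<le> e"
    and U: "U \<in> sets (Rspace k)"
  shows "measure P U \<le> measure Q (eps_nbhd k U e) + e"
proof -
  define I where "I = {c \<in> grid_labels k m. grid_cell k m c \<inter> U \<noteq> {}}"
  have I: "finite I" "I \<subseteq> grid_labels k m" unfolding I_def using finite_grid_labels by auto
  have "measure P U \<le> (\<Sum>c\<in>I. measure P (grid_cell k m c))"
    unfolding I_def by (rule measure_le_sum_grid_cells_meeting[OF P P_cube m U])
  also have "\<dots> \<le> (\<Sum>c\<in>I. measure Q (grid_cell k m c) + \<eta>)"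
    by (rule sum_mono) (use cells I(2) in blast)
  also have "\<dots> = (\<Sum>c\<in>I. measure Q (grid_cell k m c)) + real (card I) * \<eta>"
    by (simp add: sum.distrib)
  also have "(\<Sum>c\<in>I. measure Q (grid_cell k m c)) \<le> measure Q (eps_nbhd k U e)"
    unfolding I_def by (rule sum_grid_cells_meeting_le_eps_nbhd[OF Q m mesh])
  also have "real (card I) * \<eta> \<le> real (card (grid_labels k m)) * \<eta>"
    using card_mono[OF finite_grid_labels I(2)] \<open>0 \<le> \<eta>\<close> by (intro mult_right_mono) simp_all
  finally show ?thesis using card by linarith
qed

text \<open>Quantising the masses of the grid cells to multiples of \<open>1/L\<close> yields a finite-valued
  invariant that determines a probability measure on the cube up to Levy--Prokhorov distance \<open>e\<close>.\<close>

definition quantised_cell_masses :: "nat \<Rightarrow> nat \<Rightarrow> nat \<Rightarrow> (nat \<Rightarrow> real) measure \<Rightarrow> (nat \<Rightarrow> nat) \<Rightarrow> int" where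
  "quantised_cell_masses k m L P = (\<lambda>c\<in>grid_labels k m. \<lfloor>measure P (grid_cell k m c) * L\<rfloor>)"

lemma quantised_cell_masses_range:
  assumes "Rprob k P"
  shows "quantised_cell_masses k m L P \<in> (\<Pi>\<^sub>E c\<in>grid_labels k m. {0..int L})"
proof -
  have "\<lfloor>measure P (grid_cell k m c) * L\<rfloor> \<le> int L" for c
  proof -
    have "measure P (grid_cell k m c) * L \<le> 1 * real L"
      using Rprob_measure_le_1[OF assms] by (intro mult_right_mono) auto
    then show ?thesis by linarith
  qed
  then show ?thesis unfolding quantised_cell_masses_def by auto
qed

lemma LP_dist_le_of_quantised_cell_masses_eq:
  assumes P: "Rprob k P" and Q: "Rprob k Q"
    and P_cube: "measure P (cube k) = 1" and Q_cube: "measure Q (cube k) = 1"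
    and m: "1 \<le> m" and L: "0 < L" and mesh: "real (2 * k) / real m < e"
    and card: "real (card (grid_labels k m)) / real L < e"
    and eq: "quantised_cell_masses k m L P = quantised_cell_masses k m L Q"
  shows "LP_dist k P Q \<le> e"
proof (rule LP_dist_le)
  show "0 \<le> e" using mesh by (smt (verit) divide_nonneg_nonneg of_nat_0_le_iff)
  fix e' assume e': "e < e'"
  have close: "\<bar>measure P (grid_cell k m c) - measure Q (grid_cell k m c)\<bar> \<le> 1 / L"
    if c: "c \<in> grid_labels k m" for c
  proof -
    have "\<lfloor>measure P (grid_cell k m c) * L\<rfloor> = \<lfloor>measure Q (grid_cell k m c) * L\<rfloor>"
      using fun_cong[OF eq, of c] c unfolding quantised_cell_masses_def by simp
    then have "\<bar>measure P (grid_cell k m c) * L - measure Q (grid_cell k m c) * L\<bar> \<le> 1" by linarith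
    then have "\<bar>measure P (grid_cell k m c) - measure Q (grid_cell k m c)\<bar> * L \<le> 1"
      by (simp add: abs_mult left_diff_distrib[symmetric])
    then show ?thesis using L by (simp add: field_simps)
  qed
  have PQ: "measure P (grid_cell k m c) \<le> measure Q (grid_cell k m c) + 1 / L"
    and QP: "measure Q (grid_cell k m c) \<le> measure P (grid_cell k m c) + 1 / L"
    if "c \<in> grid_labels k m" for c
    using close[OF that] by (simp_all add: abs_le_iff)
  have card': "real (card (grid_labels k m)) * (1 / real L) \<le> e'" and mesh': "real (2 * k) / real m < e'"
    using card mesh e' by simp_all
  show "LP_close k P Q e'" unfolding LP_close_def
  proof (intro ballI conjI)
    fix U assume U: "U \<in> sets (Rspace k)"
    show "measure P U \<le> measure Q (eps_nbhd k U e') + e'"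
      by (rule measure_le_eps_nbhd_of_grid_cells[OF P Q P_cube m PQ _ mesh' card' U]) simp_all
    show "measure Q U \<le> measure P (eps_nbhd k U e') + e'"
      by (rule measure_le_eps_nbhd_of_grid_cells[OF Q P Q_cube m QP _ mesh' card' U]) simp_all
  qed
qed

lemma LP_totally_bounded_on_cube:
  assumes e: "0 < e"
  obtains K and g :: "(nat \<Rightarrow> real) measure \<Rightarrow> (nat \<Rightarrow> nat) \<Rightarrow> int"
  where "finite K" "\<And>P. Rprob k P \<Longrightarrow> g P \<in> K"
    "\<And>P Q. Rprob k P \<Longrightarrow> Rprob k Q \<Longrightarrow> measure P (cube k) = 1 \<Longrightarrow> measure Q (cube k) = 1 \<Longrightarrow>
        g P = g Q \<Longrightarrow> LP_dist k P Q \<le> e"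
proof -
  define m where "m = nat \<lceil>2 * k / e\<rceil> + 1"
  have m: "1 \<le> m" unfolding m_def by simp
  have mesh: "real (2 * k) / real m < e"
  proof -
    have "2 * k / e < m" unfolding m_def by linarith
    then have "2 * k < m * e" using e by (simp add: field_simps)
    then show ?thesis using m by (simp add: field_simps)
  qed
  define L where "L = nat \<lceil>card (grid_labels k m) / e\<rceil> + 1"
  have L: "0 < L" unfolding L_def by simp
  have card: "real (card (grid_labels k m)) / real L < e"
  proof -
    have "card (grid_labels k m) / e < L" unfolding L_def by linarith
    then have "card (grid_labels k m) < L * e" using e by (simp add: field_simps)
    then show ?thesis using L by (simp add: field_simps)
  qed
  show ?thesis
  proof (rule that)
    show "finite (\<Pi>\<^sub>E c\<in>grid_labels k m. {0..int L})"
      using finite_grid_labels by (intro finite_PiE) auto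
    show "quantised_cell_masses k m L P \<in> (\<Pi>\<^sub>E c\<in>grid_labels k m. {0..int L})" if "Rprob k P" for P
      by (rule quantised_cell_masses_range[OF that])
  qed (rule LP_dist_le_of_quantised_cell_masses_eq[OF _ _ _ _ m L mesh card])
qed

lemma haus_LP_le:
  assumes "X \<noteq> {}" "Y \<noteq> {}" and nonneg: "\<And>P Q. P \<in> X \<Longrightarrow> Q \<in> Y \<Longrightarrow> 0 \<le> LP_dist k P Q"
    and XY: "\<And>P. P \<in> X \<Longrightarrow> \<exists>Q\<in>Y. LP_dist k P Q \<le> e"
    and YX: "\<And>Q. Q \<in> Y \<Longrightarrow> \<exists>P\<in>X. LP_dist k P Q \<le> e"
  shows "haus_LP k X Y \<le> e"
proof -
  have "(INF Q\<in>Y. LP_dist k P Q) \<le> e" if "P \<in> X" for P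
    using XY[OF that] nonneg[OF that] by (meson bdd_belowI2 cINF_lower order_trans)
  moreover have "(INF P\<in>X. LP_dist k P Q) \<le> e" if "Q \<in> Y" for Q
    using YX[OF that] nonneg[OF _ that] by (meson bdd_belowI2 cINF_lower order_trans)
  ultimately show ?thesis
    unfolding haus_LP_def using assms(1,2) by (simp add: cSUP_least)
qed

lemma haus_LP_nonneg:
  assumes "X \<noteq> {}" "Y \<noteq> {}"
    and bounds: "\<And>P Q. P \<in> X \<Longrightarrow> Q \<in> Y \<Longrightarrow> 0 \<le> LP_dist k P Q \<and> LP_dist k P Q \<le> 1"
  shows "0 \<le> haus_LP k X Y"
proof -
  obtain P0 Q0 where P0: "P0 \<in> X" and Q0: "Q0 \<in> Y" using assms(1,2) by blast
  have "(INF Q\<in>Y. LP_dist k P Q) \<le> 1" if "P \<in> X" for P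
    using bounds[OF that Q0] bounds[OF that]
    by (meson bdd_belowI2 cINF_lower[OF _ Q0] order_trans)
  then have "(INF Q\<in>Y. LP_dist k P0 Q) \<le> (SUP P\<in>X. INF Q\<in>Y. LP_dist k P Q)"
    by (intro cSUP_upper[OF P0] bdd_aboveI2[where M=1])
  moreover have "0 \<le> (INF Q\<in>Y. LP_dist k P0 Q)"
    using bounds[OF P0] assms(2) by (intro cINF_greatest) auto
  ultimately show ?thesis unfolding haus_LP_def by linarith
qed

definition profile :: "nat \<Rightarrow> (nat \<Rightarrow> 'a \<Rightarrow> real) \<Rightarrow> (('a \<Rightarrow> real) \<Rightarrow> ('a \<Rightarrow> real)) \<Rightarrow> 'a \<Rightarrow> nat \<Rightarrow> real" where
  "profile k v B x = (\<lambda>j\<in>{..<2*k}. if j < k then v j x else B (v (j - k)) x)"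

lemma S_k_eq_profiles: "S_k M B k = {distr M (Rspace k) (profile k v B) | v.
       \<forall>j<k. v j \<in> borel_measurable M \<and> (\<forall>x\<in>space M. -1 \<le> v j x \<and> v j x \<le> 1)}"
  unfolding S_k_def profile_def ..

lemma profile_in_space: "profile k v B x \<in> space (Rspace k)"
  unfolding profile_def space_Rspace by auto

lemma profile_in_cube:
  "(\<And>j. j < k \<Longrightarrow> \<bar>v j x\<bar> \<le> 1) \<Longrightarrow> (\<And>j. j < k \<Longrightarrow> \<bar>B (v j) x\<bar> \<le> 1) \<Longrightarrow> profile k v B x \<in> cube k"
  unfolding cube_def using profile_in_space[of k v B x] by (auto simp: profile_def)

lemma measurable_profile:
  assumes "\<And>j. j < k \<Longrightarrow> v j \<in> borel_measurable M" "\<And>j. j < k \<Longrightarrow> B (v j) \<in> borel_measurable M"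
  shows "profile k v B \<in> measurable M (Rspace k)"
  unfolding profile_def Rspace_def
proof (rule measurable_restrict)
  fix j assume "j \<in> {..<2*k}"
  then show "(\<lambda>x. if j < k then v j x else B (v (j - k)) x) \<in> borel_measurable M"
    using assms[of j] assms(2)[of "j - k"] by (cases "j < k") auto
qed

lemma S_k_Rprob_cube:
  assumes M: "prob_space M" and P: "P \<in> S_k M B k"
    and B: "\<And>v. v \<in> borel_measurable M \<Longrightarrow> (\<forall>x\<in>space M. \<bar>v x\<bar> \<le> 1) \<Longrightarrow>
        B v \<in> borel_measurable M \<and> (\<forall>x\<in>space M. \<bar>B v x\<bar> \<le> 1)"
  shows "Rprob k P" "measure P (cube k) = 1"
proof -
  obtain v where P_eq: "P = distr M (Rspace k) (profile k v B)"
    and v: "\<And>j. j < k \<Longrightarrow> v j \<in> borel_measurable M \<and> (\<forall>x\<in>space M. \<bar>v j x\<bar> \<le> 1)"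
    using P unfolding S_k_eq_profiles by (auto simp: abs_le_iff)
  have F: "profile k v B \<in> measurable M (Rspace k)"
    using v B by (intro measurable_profile) auto
  show "Rprob k P" unfolding P_eq by (rule Rprob_distr[OF M F])
  have "profile k v B -` cube k \<inter> space M = space M"
    using v B by (auto intro!: profile_in_cube)
  then show "measure P (cube k) = 1"
    unfolding P_eq using measure_distr[OF F cube_in_sets] prob_space.prob_space[OF M] by simp
qed

section \<open>Regular graphs\<close>

lemma nbrs_subset: "nbrs n E c \<subseteq> {..<n}"
  unfolding nbrs_def by auto

lemma finite_nbrs: "finite (nbrs n E c)"
  using finite_subset[OF nbrs_subset] by blast

lemma card_nbrs: "regular n E d \<Longrightarrow> c < n \<Longrightarrow> card (nbrs n E c) = d"
  unfolding regular_def by auto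

lemma nbrs_eq_in_edges: "fin_graph n E \<Longrightarrow> nbrs n E c = {j. j < n \<and> E j c}"
  unfolding nbrs_def fin_graph_def by auto

lemma adj_op_eq_sum_nbrs: "fin_graph n E \<Longrightarrow> adj_op n E d u c = (\<Sum>j\<in>nbrs n E c. u j) / d"
  unfolding adj_op_def by (simp add: nbrs_eq_in_edges)

lemma adj_op_linear:
  "adj_op n E d (\<lambda>y. \<alpha> * g y + \<beta> * h y) x = \<alpha> * adj_op n E d g x + \<beta> * adj_op n E d h x"
  unfolding adj_op_def by (simp add: sum.distrib sum_distrib_left[symmetric] add_divide_distrib)

lemma abs_adj_op_le_1:
  assumes G: "fin_graph n E" "regular n E d" and "0 < d"
    and u: "\<And>c. c < n \<Longrightarrow> \<bar>u c\<bar> \<le> 1" and "c < n"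
  shows "\<bar>adj_op n E d u c\<bar> \<le> 1"
proof -
  have "\<bar>\<Sum>j\<in>nbrs n E c. u j\<bar> \<le> (\<Sum>j\<in>nbrs n E c. 1)"
    using u nbrs_subset[of n E c] by (intro order_trans[OF sum_abs sum_mono]) auto
  also have "\<dots> = d" using card_nbrs[OF G(2) \<open>c < n\<close>] by simp
  finally show ?thesis
    using \<open>0 < d\<close> by (simp add: adj_op_eq_sum_nbrs[OF G(1)] abs_divide divide_le_eq_1)
qed

lemma measurable_uniform_count_measure:
  "F \<in> A \<rightarrow> space N \<Longrightarrow> F \<in> measurable (uniform_count_measure A) N"
  using measurable_cong_sets[OF sets_uniform_count_measure_count_space refl, of A N]
  by (simp add: measurable_count_space_eq1 space_uniform_count_measure)

lemma P_operator_adj_op: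
  assumes G: "fin_graph n E" "regular n E d" and "0 < d" "0 < n"
  shows "P_operator (uniform_count_measure {..<n}) (adj_op n E d)"
  unfolding P_operator_def
proof (intro conjI allI impI exI[of _ 1])
  fix g h :: "nat \<Rightarrow> real" and \<alpha> \<beta> :: real
  show "AE x in uniform_count_measure {..<n}.
      adj_op n E d (\<lambda>y. \<alpha> * g y + \<beta> * h y) x = \<alpha> * adj_op n E d g x + \<beta> * adj_op n E d h x"
    by (simp add: adj_op_linear)
next
  fix g :: "nat \<Rightarrow> real" assume g: "\<forall>x\<in>space (uniform_count_measure {..<n}). \<bar>g x\<bar> \<le> 1"
  interpret prob_space "uniform_count_measure {..<n}"
    using \<open>0 < n\<close> by (intro prob_space_uniform_count_measure) auto
  have bound: "\<forall>x\<in>space (uniform_count_measure {..<n}). \<bar>adj_op n E d g x\<bar> \<le> 1"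
    using g abs_adj_op_le_1[OF G \<open>0 < d\<close>] by (simp add: space_uniform_count_measure)
  have meas: "adj_op n E d g \<in> borel_measurable (uniform_count_measure {..<n})"
    by (simp add: measurable_count_space_eq1 measurable_cong_sets[OF sets_uniform_count_measure_count_space refl])
  show "integrable (uniform_count_measure {..<n}) (adj_op n E d g)"
    using bound by (intro integrable_const_bound[OF _ meas, where B=1] AE_I2) simp
  then have "(\<integral>x. \<bar>adj_op n E d g x\<bar> \<partial>uniform_count_measure {..<n}) \<le> (\<integral>x. 1 \<partial>uniform_count_measure {..<n})"
    using bound by (intro integral_mono) auto
  then show "(\<integral>x. \<bar>adj_op n E d g x\<bar> \<partial>uniform_count_measure {..<n}) \<le> 1"
    using prob_space by simp
qed

lemma sum_card_Int_nbrs: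
  assumes G: "fin_graph n E" "regular n E d"
  shows "(\<Sum>c<n. card (T \<inter> nbrs n E c)) = d * card (T \<inter> {..<n})"
proof -
  have "(\<Sum>c<n. card (T \<inter> nbrs n E c)) = (\<Sum>c<n. \<Sum>t\<in>T \<inter> {..<n}. if E c t then 1 else 0)"
  proof (rule sum.cong[OF refl])
    fix c
    have "T \<inter> nbrs n E c = {t \<in> T \<inter> {..<n}. E c t}" unfolding nbrs_def by auto
    then show "card (T \<inter> nbrs n E c) = (\<Sum>t\<in>T \<inter> {..<n}. if E c t then 1 else 0)"
      by (simp add: sum.inter_filter[symmetric])
  qed
  also have "\<dots> = (\<Sum>t\<in>T \<inter> {..<n}. \<Sum>c<n. if E c t then 1 else 0)"
    by (rule sum.swap)
  also have "\<dots> = (\<Sum>t\<in>T \<inter> {..<n}. d)"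
  proof (rule sum.cong[OF refl])
    fix t assume "t \<in> T \<inter> {..<n}"
    then have "card (nbrs n E t) = d" by (intro card_nbrs[OF G(2)]) auto
    moreover have "nbrs n E t = {c \<in> {..<n}. E c t}" using nbrs_eq_in_edges[OF G(1)] by auto
    ultimately have "card {c \<in> {..<n}. E c t} = d" by simp
    then show "(\<Sum>c<n. if E c t then 1 else 0) = d" by (simp add: sum.inter_filter[symmetric])
  qed
  finally show ?thesis by simp
qed

lemma integral_uniform_nbrs:
  assumes G: "fin_graph n E" "regular n E d" and "0 < d" "c < n"
  shows "(\<integral>y. u y \<partial>uniform_measure (count_space {..<n}) (nbrs n E c)) = adj_op n E d u c"
proof -
  let ?N = "nbrs n E c"
  have "emeasure (count_space {..<n}) ?N = d"
    using card_nbrs[OF G(2) \<open>c < n\<close>] nbrs_subset finite_nbrs by (simp add: emeasure_count_space_finite)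
  moreover have "1 / ennreal (real d) = ennreal (1 / real d)"
    using divide_ennreal[of 1 "real d"] \<open>0 < d\<close> by simp
  ultimately have "uniform_measure (count_space {..<n}) ?N = density (count_space {..<n}) (\<lambda>j. ennreal (indicator ?N j / d))"
    unfolding uniform_measure_def using \<open>0 < d\<close>
    by (intro density_cong) (auto simp: indicator_def divide_ennreal ennreal_of_nat_eq_real_of_nat)
  then have "(\<integral>y. u y \<partial>uniform_measure (count_space {..<n}) ?N)
      = (\<integral>j. (indicator ?N j / d) *\<^sub>R u j \<partial>count_space {..<n})"
    by (simp only:) (rule integral_density, auto)
  also have "\<dots> = (\<Sum>j<n. u j * indicator ?N j) / d"
    by (simp add: lebesgue_integral_count_space_finite sum_divide_distrib mult.commute)
  also have "(\<Sum>j<n. u j * indicator ?N j) = (\<Sum>j<n. if j \<in> ?N then u j else 0)"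
    by (intro sum.cong) (auto simp: indicator_def)
  also have "\<dots> = sum u ({..<n} \<inter> ?N)" by (rule sum.inter_restrict[symmetric]) simp
  also have "{..<n} \<inter> ?N = ?N" using nbrs_subset[of n E c] by blast
  finally show ?thesis using adj_op_eq_sum_nbrs[OF G(1)] by simp
qed

section \<open>Cylinder sets of an inverse limit\<close>

lemma measurable_coord_borel: "(\<lambda>x::nat \<Rightarrow> nat. x i) \<in> measurable borel (count_space UNIV)"
proof -
  have "(\<lambda>x::nat \<Rightarrow> nat. x i) \<in> measurable (Pi\<^sub>M UNIV (\<lambda>_. borel)) borel"
    by (rule measurable_component_singleton) simp
  then show ?thesis
    using measurable_cong_sets[OF sets_PiM_equal_borel refl] measurable_cong_sets[OF refl sets_borel_eq_count_space]
    by blast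
qed

lemma coord_set_in_borel: "{x::nat \<Rightarrow> nat. x i \<in> T} \<in> sets borel"
  using measurable_sets[OF measurable_coord_borel, of T] by (simp add: vimage_def)

lemma inv_limit_in_borel: "inv_limit n f \<in> sets borel"
proof -
  have "inv_limit n f = (\<Inter>i. {x. x i \<in> {..<n i}} \<inter> (\<Union>c. {x. x (Suc i) \<in> {c}} \<inter> {x. x i \<in> {f i c}}))"
  proof (rule set_eqI)
    fix x :: "nat \<Rightarrow> nat"
    have "x \<in> (\<Union>c. {x. x (Suc i) \<in> {c}} \<inter> {x. x i \<in> {f i c}}) \<longleftrightarrow> f i (x (Suc i)) = x i" for i
      by auto
    then show "x \<in> inv_limit n f \<longleftrightarrow> x \<in> (\<Inter>i. {x. x i \<in> {..<n i}} \<inter> (\<Union>c. {x. x (Suc i) \<in> {c}} \<inter> {x. x i \<in> {f i c}}))"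
      unfolding inv_limit_def by simp
  qed
  also have "\<dots> \<in> sets borel"
    by (intro sets.countable_INT' sets.countable_UN' sets.Int coord_set_in_borel) auto
  finally show ?thesis .
qed

definition inv_limit_cyl :: "(nat \<Rightarrow> nat) \<Rightarrow> (nat \<Rightarrow> nat \<Rightarrow> nat) \<Rightarrow> nat \<Rightarrow> nat set \<Rightarrow> (nat \<Rightarrow> nat) set" where
  "inv_limit_cyl n f i T = {x \<in> inv_limit n f. x i \<in> T}"

definition inv_limit_cyls :: "(nat \<Rightarrow> nat) \<Rightarrow> (nat \<Rightarrow> nat \<Rightarrow> nat) \<Rightarrow> (nat \<Rightarrow> nat) set set" where
  "inv_limit_cyls n f = {inv_limit_cyl n f i T | i T. True}"

lemma sets_inv_limit_borel: "sets (inv_limit_borel n f) = sigma_sets (inv_limit n f) (inv_limit_cyls n f)"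
proof -
  let ?V = "inv_limit n f" and ?C = "{{x::nat \<Rightarrow> nat. x i \<in> T} | i T. True}"
  have borel: "sets (borel :: (nat \<Rightarrow> nat) measure) = sigma_sets UNIV ?C"
    unfolding sets_PiM_equal_borel[symmetric] sets_PiM_single by (simp add: sets_borel_eq_count_space)
  have "sets (inv_limit_borel n f) = (\<inter>) ?V ` sigma_sets UNIV ?C"
    unfolding inv_limit_borel_def sets_restrict_space borel ..
  also have "\<dots> = sigma_sets ?V ((\<inter>) ?V ` ?C)"
    by (rule sigma_sets_Int) (use inv_limit_in_borel[of n f] borel in auto)
  also have "(\<inter>) ?V ` ?C = inv_limit_cyls n f"
  proof (intro equalityI subsetI)
    fix Z assume "Z \<in> (\<inter>) ?V ` ?C"
    then obtain i T where "Z = ?V \<inter> {x. x i \<in> T}" by auto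
    then show "Z \<in> inv_limit_cyls n f" unfolding inv_limit_cyls_def inv_limit_cyl_def by auto
  next
    fix Z assume "Z \<in> inv_limit_cyls n f"
    then obtain i T where "Z = inv_limit_cyl n f i T" unfolding inv_limit_cyls_def by auto
    then have "Z = ?V \<inter> {x. x i \<in> T}" unfolding inv_limit_cyl_def by auto
    then show "Z \<in> (\<inter>) ?V ` ?C" by blast
  qed
  finally show ?thesis .
qed

text \<open>\<open>tower_map f l t\<close> is the composite \<open>f\<^sub>l \<circ> \<dots> \<circ> f\<^sub>l\<^sub>+\<^sub>t\<^sub>-\<^sub>1 : V(G\<^sub>l\<^sub>+\<^sub>t) \<rightarrow> V(G\<^sub>l)\<close>.\<close>

fun tower_map :: "(nat \<Rightarrow> nat \<Rightarrow> nat) \<Rightarrow> nat \<Rightarrow> nat \<Rightarrow> nat \<Rightarrow> nat" where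
  "tower_map f l 0 c = c"
| "tower_map f l (Suc t) c = tower_map f l t (f (l + t) c)"

lemma inv_limit_coord_tower_map: "x \<in> inv_limit n f \<Longrightarrow> x l = tower_map f l t (x (l + t))"
proof (induction t)
  case (Suc t)
  then have "x (l + t) = f (l + t) (x (Suc (l + t)))" unfolding inv_limit_def by auto
  then show ?case using Suc by simp
qed simp

lemma inv_limit_cyl_lift:
  "j \<le> i \<Longrightarrow> inv_limit_cyl n f j T = inv_limit_cyl n f i {c. tower_map f j (i - j) c \<in> T}"
  unfolding inv_limit_cyl_def using inv_limit_coord_tower_map[of _ n f j "i - j"] by auto

lemma Int_stable_inv_limit_cyls: "Int_stable (inv_limit_cyls n f)"
proof (rule Int_stableI)
  fix A B assume "A \<in> inv_limit_cyls n f" "B \<in> inv_limit_cyls n f"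
  then obtain i S j T where A: "A = inv_limit_cyl n f i S" and B: "B = inv_limit_cyl n f j T"
    unfolding inv_limit_cyls_def by auto
  let ?m = "max i j"
  have "A = inv_limit_cyl n f ?m {c. tower_map f i (?m - i) c \<in> S}"
    "B = inv_limit_cyl n f ?m {c. tower_map f j (?m - j) c \<in> T}"
    unfolding A B by (simp_all add: inv_limit_cyl_lift)
  then have "A \<inter> B = inv_limit_cyl n f ?m ({c. tower_map f i (?m - i) c \<in> S} \<inter> {c. tower_map f j (?m - j) c \<in> T})"
    by (auto simp: inv_limit_cyl_def)
  then show "A \<inter> B \<in> inv_limit_cyls n f" unfolding inv_limit_cyls_def by blast
qed

section \<open>Approximation by an eventually generating sequence of algebras\<close>

lemma (in finite_measure) measure_UN_lessThan_close:
  fixes A :: "nat \<Rightarrow> 'a set"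
  assumes "range A \<subseteq> sets M" "0 < \<delta>"
  shows "\<exists>N. measure M (\<Union>m. A m) - measure M (\<Union>m<N. A m) < \<delta>"
proof -
  have "(\<lambda>N. measure M (\<Union>m<N. A m)) \<longlonglongrightarrow> measure M (\<Union>N. \<Union>m<N. A m)"
    using assms(1) by (intro finite_Lim_measure_incseq) (auto simp: incseq_def intro: less_le_trans)
  moreover have "(\<Union>N. \<Union>m<N. A m) = (\<Union>m. A m)" by blast
  ultimately have "\<forall>\<^sub>F N in sequentially. measure M (\<Union>m. A m) - \<delta> < measure M (\<Union>m<N. A m)"
    using assms(2) by (intro order_tendstoD(1)) auto
  then obtain N where "measure M (\<Union>m. A m) - \<delta> < measure M (\<Union>m<N. A m)"
    by (auto simp: eventually_sequentially)
  then show ?thesis by (intro exI[of _ N]) linarith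
qed

lemma (in finite_measure) measure_sym_diff_UN_le:
  fixes A Y :: "nat \<Rightarrow> 'a set" and N :: nat
  assumes A: "range A \<subseteq> sets M" and Y: "\<And>m. m < N \<Longrightarrow> Y m \<in> sets M"
  shows "measure M (sym_diff (\<Union>m. A m) (\<Union>m<N. Y m))
    \<le> measure M (\<Union>m. A m) - measure M (\<Union>m<N. A m) + (\<Sum>m<N. measure M (sym_diff (A m) (Y m)))"
proof -
  have A_sets: "A m \<in> sets M" for m using A by blast
  have "sym_diff (\<Union>m. A m) (\<Union>m<N. Y m) \<subseteq> ((\<Union>m. A m) - (\<Union>m<N. A m)) \<union> (\<Union>m<N. sym_diff (A m) (Y m))"
    by blast
  then have "measure M (sym_diff (\<Union>m. A m) (\<Union>m<N. Y m))
      \<le> measure M ((\<Union>m. A m) - (\<Union>m<N. A m)) + measure M (\<Union>m<N. sym_diff (A m) (Y m))"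
    using A_sets Y by (intro order_trans[OF finite_measure_mono measure_Un_le]) auto
  also have "measure M ((\<Union>m. A m) - (\<Union>m<N. A m)) = measure M (\<Union>m. A m) - measure M (\<Union>m<N. A m)"
    using A_sets by (intro finite_measure_Diff) auto
  also have "measure M (\<Union>m<N. sym_diff (A m) (Y m)) \<le> (\<Sum>m<N. measure M (sym_diff (A m) (Y m)))"
    using A_sets Y by (intro measure_UNION_le) auto
  finally show ?thesis by simp
qed

locale eventual_generation = finite_measure M for M :: "'a measure" +
  fixes G :: "'a set set" and C :: "nat \<Rightarrow> 'a set set"
  assumes sets_eq: "sets M = sigma_sets (space M) G"
    and generator_eventually: "X \<in> G \<Longrightarrow> \<exists>j. \<forall>i\<ge>j. X \<in> C i"
    and level_sets: "C i \<subseteq> sets M"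
    and empty_level: "{} \<in> C i"
    and compl_level: "Y \<in> C i \<Longrightarrow> space M - Y \<in> C i"
    and Un_level: "Y \<in> C i \<Longrightarrow> Z \<in> C i \<Longrightarrow> Y \<union> Z \<in> C i"
begin

definition approximable :: "'a set \<Rightarrow> bool" where
  "approximable X \<longleftrightarrow> (\<forall>\<delta>>0. \<exists>j. \<forall>i\<ge>j. \<exists>Y\<in>C i. measure M (sym_diff X Y) < \<delta>)"

lemma finite_UN_level:
  fixes N :: nat
  shows "(\<And>m. m < N \<Longrightarrow> Y m \<in> C i) \<Longrightarrow> (\<Union>m<N. Y m) \<in> C i"
  by (induction N) (auto simp: lessThan_Suc empty_level Un_level)

lemma approximable_compl:
  assumes "X \<subseteq> space M" "approximable X"
  shows "approximable (space M - X)"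
  unfolding approximable_def
proof (intro allI impI)
  fix \<delta> :: real assume "0 < \<delta>"
  then obtain j where j: "\<And>i. j \<le> i \<Longrightarrow> \<exists>Y\<in>C i. measure M (sym_diff X Y) < \<delta>"
    using assms(2) unfolding approximable_def by blast
  have "\<exists>Y\<in>C i. measure M (sym_diff (space M - X) Y) < \<delta>" if i: "j \<le> i" for i
  proof -
    obtain Y where Y: "Y \<in> C i" "measure M (sym_diff X Y) < \<delta>" using j[OF i] by blast
    have "Y \<subseteq> space M" using Y(1) level_sets sets.sets_into_space by blast
    then have "sym_diff (space M - X) (space M - Y) = sym_diff X Y" using assms(1) by blast
    then show ?thesis using Y by (intro bexI[OF _ compl_level[OF Y(1)]]) simp
  qed
  then show "\<exists>j. \<forall>i\<ge>j. \<exists>Y\<in>C i. measure M (sym_diff (space M - X) Y) < \<delta>" by blast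
qed

lemma approximable_countable_UN:
  fixes A :: "nat \<Rightarrow> 'a set"
  assumes A: "range A \<subseteq> sets M" and approx: "\<And>m. approximable (A m)"
  shows "approximable (\<Union>m. A m)"
  unfolding approximable_def
proof (intro allI impI)
  fix \<delta> :: real assume \<delta>: "0 < \<delta>"
  obtain N where N: "measure M (\<Union>m. A m) - measure M (\<Union>m<N. A m) < \<delta> / 2"
    using measure_UN_lessThan_close[OF A, of "\<delta> / 2"] \<delta> by auto
  define e where "e = \<delta> / (2 * real (Suc N))"
  have "0 < e" unfolding e_def using \<delta> by simp
  then have "\<forall>m. \<exists>j. \<forall>i\<ge>j. \<exists>Y\<in>C i. measure M (sym_diff (A m) Y) < e"
    using approx unfolding approximable_def by blast
  then obtain J where J: "\<And>m i. J m \<le> i \<Longrightarrow> \<exists>Y\<in>C i. measure M (sym_diff (A m) Y) < e" by metis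
  have "\<exists>Y\<in>C i. measure M (sym_diff (\<Union>m. A m) Y) < \<delta>" if i: "(\<Sum>m<N. J m) \<le> i" for i
  proof -
    have "\<forall>m\<in>{..<N}. \<exists>Y. Y \<in> C i \<and> measure M (sym_diff (A m) Y) < e"
    proof
      fix m assume "m \<in> {..<N}"
      then have "J m \<le> i" using i member_le_sum[of m "{..<N}" J] by simp
      then show "\<exists>Y. Y \<in> C i \<and> measure M (sym_diff (A m) Y) < e" using J by blast
    qed
    from bchoice[OF this] obtain Y where "\<forall>m\<in>{..<N}. Y m \<in> C i \<and> measure M (sym_diff (A m) (Y m)) < e"
      by blast
    then have Y: "\<And>m. m < N \<Longrightarrow> Y m \<in> C i \<and> measure M (sym_diff (A m) (Y m)) < e" by simp
    have "measure M (sym_diff (\<Union>m. A m) (\<Union>m<N. Y m))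
        \<le> measure M (\<Union>m. A m) - measure M (\<Union>m<N. A m) + (\<Sum>m<N. measure M (sym_diff (A m) (Y m)))"
      using Y level_sets by (intro measure_sym_diff_UN_le A) blast
    also have "(\<Sum>m<N. measure M (sym_diff (A m) (Y m))) \<le> (\<Sum>m<N. e)"
      using Y by (intro sum_mono) (auto intro: less_imp_le)
    also have "\<dots> \<le> \<delta> / 2" unfolding e_def using \<delta> by (simp add: field_simps)
    finally have "measure M (sym_diff (\<Union>m. A m) (\<Union>m<N. Y m)) < \<delta>" using N by linarith
    moreover have "(\<Union>m<N. Y m) \<in> C i" using Y by (intro finite_UN_level) blast
    ultimately show ?thesis by blast
  qed
  then show "\<exists>j. \<forall>i\<ge>j. \<exists>Y\<in>C i. measure M (sym_diff (\<Union>m. A m) Y) < \<delta>" by blast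
qed

lemma approximable_sets:
  assumes "X \<in> sets M"
  shows "approximable X"
proof -
  have "X \<in> sigma_sets (space M) G" using assms sets_eq by simp
  then show ?thesis
  proof (induction rule: sigma_sets.induct)
    case (Basic X)
    then obtain j where "\<forall>i\<ge>j. X \<in> C i" using generator_eventually by blast
    then show ?case unfolding approximable_def by force
  next
    case Empty
    show ?case unfolding approximable_def using empty_level by force
  next
    case (Compl X)
    then have "X \<in> sets M" using sets_eq by simp
    then have "X \<subseteq> space M" by (rule sets.sets_into_space)
    then show ?case using approximable_compl Compl(2) by simp
  next
    case (Union A)
    then show ?case using approximable_countable_UN[of A] sets_eq by (simp add: image_subset_iff)
  qed
qed

end

lemma integral_abs_diff_triangle:
  fixes f g h :: "'a \<Rightarrow> real"
  assumes "integrable M f" "integrable M g" "integrable M h"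
  shows "(\<integral>x. \<bar>f x - h x\<bar> \<partial>M) \<le> (\<integral>x. \<bar>f x - g x\<bar> \<partial>M) + (\<integral>x. \<bar>g x - h x\<bar> \<partial>M)"
proof -
  have "(\<integral>x. \<bar>f x - h x\<bar> \<partial>M) \<le> (\<integral>x. \<bar>f x - g x\<bar> + \<bar>g x - h x\<bar> \<partial>M)"
    using assms by (intro integral_mono) auto
  also have "\<dots> = (\<integral>x. \<bar>f x - g x\<bar> \<partial>M) + (\<integral>x. \<bar>g x - h x\<bar> \<partial>M)"
    using assms by (intro Bochner_Integration.integral_add) auto
  finally show ?thesis .
qed

section \<open>The neighbour kernel of the inverse limit\<close>

locale graph_tower_limit =
  fixes n :: "nat \<Rightarrow> nat" and E :: "nat \<Rightarrow> nat \<Rightarrow> nat \<Rightarrow> bool" and f :: "nat \<Rightarrow> nat \<Rightarrow> nat"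
    and d :: "nat \<Rightarrow> nat" and \<mu> :: "(nat \<Rightarrow> nat) measure"
    and \<nu> :: "(nat \<Rightarrow> nat) \<Rightarrow> (nat \<Rightarrow> nat) measure"
  assumes n_pos: "\<And>i. 0 < n i"
    and graphs: "\<And>i. fin_graph (n i) (E i)"
    and reg: "\<And>i. regular (n i) (E i) (d i)"
    and d_pos: "\<And>i. 0 < d i"
    and mu_prob: "prob_space \<mu>"
    and mu_sets: "sets \<mu> = sets (inv_limit_borel n f)"
    and mu_space: "space \<mu> = inv_limit n f"
    and mu_proj: "\<And>i. distr \<mu> (count_space {..<n i}) (\<lambda>x. x i) = uniform_count_measure {..<n i}"
    and nu_prob: "\<And>x. x \<in> inv_limit n f \<Longrightarrow> prob_space (\<nu> x)"
    and nu_sets: "\<And>x. x \<in> inv_limit n f \<Longrightarrow> sets (\<nu> x) = sets (inv_limit_borel n f)"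
    and nu_space: "\<And>x. x \<in> inv_limit n f \<Longrightarrow> space (\<nu> x) = inv_limit n f"
    and nu_proj: "\<And>x i. x \<in> inv_limit n f \<Longrightarrow>
       distr (\<nu> x) (count_space {..<n i}) (\<lambda>y. y i) = uniform_measure (count_space {..<n i}) (nbrs (n i) (E i) (x i))"
begin

abbreviation "V \<equiv> inv_limit n f"
abbreviation "cyl \<equiv> inv_limit_cyl n f"
abbreviation "graph_op i \<equiv> adj_op (n i) (E i) (d i)"
abbreviation "limit_op \<equiv> tower_op \<nu>"

lemma sets_mu_eq: "sets \<mu> = sigma_sets V (inv_limit_cyls n f)"
  using mu_sets sets_inv_limit_borel by simp

lemma sets_nu_eq: "x \<in> V \<Longrightarrow> sets (\<nu> x) = sets \<mu>"
  using mu_sets nu_sets by simp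

lemma space_mu_nonempty: "space \<mu> \<noteq> {}"
  using mu_prob prob_space.not_empty by blast

lemma inv_limit_coord_less: "x \<in> V \<Longrightarrow> x i < n i"
  unfolding inv_limit_def by auto

lemma measurable_coord: "(\<lambda>x. x i) \<in> measurable \<mu> (count_space UNIV)"
  using measurable_restrict_space1[OF measurable_coord_borel] measurable_cong_sets[OF mu_sets refl]
  unfolding inv_limit_borel_def by blast

lemma measurable_coord_fun: "range u \<subseteq> space N \<Longrightarrow> (\<lambda>x. u (x i)) \<in> measurable \<mu> N"
  by (rule measurable_compose[OF measurable_coord]) (auto simp: measurable_count_space_eq1)

lemma measurable_coord_vertices: "(\<lambda>x. x i) \<in> measurable \<mu> (count_space {..<n i})"
proof (subst measurable_count_space_eq2, simp, intro conjI ballI)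
  show "(\<lambda>x. x i) \<in> space \<mu> \<rightarrow> {..<n i}" using inv_limit_coord_less mu_space by auto
  fix c show "(\<lambda>x. x i) -` {c} \<inter> space \<mu> \<in> sets \<mu>"
    using measurable_sets[OF measurable_coord, of "{c}"] by simp
qed

lemma measurable_nu_iff: "x \<in> V \<Longrightarrow> g \<in> measurable (\<nu> x) N \<longleftrightarrow> g \<in> measurable \<mu> N"
  using measurable_cong_sets[OF sets_nu_eq refl] by blast

lemma cyl_in_sets: "cyl i T \<in> sets \<mu>"
  using measurable_sets[OF measurable_coord, of T] mu_space
  by (simp add: inv_limit_cyl_def vimage_def Int_def conj_commute)

lemma emeasure_cyl: "emeasure \<mu> (cyl i T) = card (T \<inter> {..<n i}) / n i"
proof -
  have "emeasure \<mu> (cyl i T) = emeasure \<mu> ((\<lambda>x. x i) -` (T \<inter> {..<n i}) \<inter> space \<mu>)"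
    using mu_space inv_limit_coord_less by (intro arg_cong2[where f=emeasure]) (auto simp: inv_limit_cyl_def)
  also have "\<dots> = emeasure (uniform_count_measure {..<n i}) (T \<inter> {..<n i})"
    using emeasure_distr[OF measurable_coord_vertices, of "T \<inter> {..<n i}"] by (simp add: mu_proj)
  finally show ?thesis by (simp add: emeasure_uniform_count_measure)
qed

lemma emeasure_nu_cyl:
  assumes x: "x \<in> V"
  shows "emeasure (\<nu> x) (cyl i T) = card (T \<inter> nbrs (n i) (E i) (x i)) / d i"
proof -
  let ?N = "nbrs (n i) (E i) (x i)"
  have "emeasure (\<nu> x) (cyl i T) = emeasure (\<nu> x) ((\<lambda>y. y i) -` (T \<inter> {..<n i}) \<inter> space (\<nu> x))"
    using nu_space[OF x] inv_limit_coord_less by (intro arg_cong2[where f=emeasure]) (auto simp: inv_limit_cyl_def)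
  also have "\<dots> = emeasure (uniform_measure (count_space {..<n i}) ?N) (T \<inter> {..<n i})"
    using emeasure_distr[OF measurable_coord_vertices[unfolded measurable_nu_iff[OF x, symmetric]]]
    by (simp add: nu_proj[OF x])
  also have "\<dots> = emeasure (count_space {..<n i}) (T \<inter> ?N) / emeasure (count_space {..<n i}) ?N"
  proof -
    have "?N \<inter> (T \<inter> {..<n i}) = T \<inter> ?N" using nbrs_subset[of "n i" "E i" "x i"] by blast
    then show ?thesis using nbrs_subset[of "n i" "E i" "x i"] by (subst emeasure_uniform_measure) simp_all
  qed
  also have "\<dots> = of_nat (card (T \<inter> ?N)) / of_nat (d i)"
    using finite_nbrs nbrs_subset[of "n i" "E i" "x i"] card_nbrs[OF reg inv_limit_coord_less[OF x]]
    by (simp add: emeasure_count_space_finite finite_Int le_infI2)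
  finally show ?thesis
    using d_pos[of i] by (simp add: divide_ennreal ennreal_of_nat_eq_real_of_nat)
qed

lemma nu_measurable: "\<nu> \<in> measurable \<mu> (subprob_algebra \<mu>)"
proof (rule measurable_subprob_algebra_generated[OF sets_mu_eq Int_stable_inv_limit_cyls])
  show "inv_limit_cyls n f \<subseteq> Pow V" unfolding inv_limit_cyls_def inv_limit_cyl_def by auto
  show "\<And>x. x \<in> space \<mu> \<Longrightarrow> subprob_space (\<nu> x)"
    using nu_prob mu_space prob_space_imp_subprob_space by auto
  show "\<And>x. x \<in> space \<mu> \<Longrightarrow> sets (\<nu> x) = sets \<mu>" using sets_nu_eq mu_space by auto
  fix A assume "A \<in> inv_limit_cyls n f"
  then obtain i T where A: "A = cyl i T" unfolding inv_limit_cyls_def by auto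
  have "(\<lambda>x. ennreal (card (T \<inter> nbrs (n i) (E i) (x i)) / d i)) \<in> borel_measurable \<mu>"
    by (rule measurable_coord_fun) simp
  then show "(\<lambda>x. emeasure (\<nu> x) A) \<in> borel_measurable \<mu>"
    by (rule measurable_cong[THEN iffD1, rotated]) (simp add: A emeasure_nu_cyl mu_space)
next
  have "(\<lambda>x. 1::ennreal) \<in> borel_measurable \<mu>" by simp
  then show "(\<lambda>x. emeasure (\<nu> x) V) \<in> borel_measurable \<mu>"
    by (rule measurable_cong[THEN iffD1, rotated])
       (use nu_prob nu_space mu_space prob_space.emeasure_space_1 in fastforce)
qed

lemma measurable_limit_op: "g \<in> borel_measurable \<mu> \<Longrightarrow> limit_op (g :: _ \<Rightarrow> real) \<in> borel_measurable \<mu>"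
  unfolding tower_op_def by (rule measurable_compose[OF nu_measurable integral_measurable_subprob_algebra])

lemma limit_op_coord_fun:
  assumes x: "x \<in> V"
  shows "limit_op (\<lambda>y. u (y i)) x = graph_op i u (x i)"
proof -
  have "limit_op (\<lambda>y. u (y i)) x = (\<integral>c. u c \<partial>distr (\<nu> x) (count_space {..<n i}) (\<lambda>y. y i))"
    unfolding tower_op_def
    by (rule integral_distr[symmetric]) (simp_all add: measurable_nu_iff[OF x] measurable_coord_vertices)
  also have "\<dots> = graph_op i u (x i)"
    unfolding nu_proj[OF x]
    by (rule integral_uniform_nbrs[OF graphs reg d_pos inv_limit_coord_less[OF x]])
  finally show ?thesis .
qed

lemma nn_integral_coord_fun:
  assumes "\<And>c. 0 \<le> h c"
  shows "(\<integral>\<^sup>+x. ennreal (h (x i)) \<partial>\<mu>) = ennreal ((\<Sum>c<n i. h c) / n i)"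
proof -
  have "(\<integral>\<^sup>+x. ennreal (h (x i)) \<partial>\<mu>) = (\<integral>\<^sup>+c. ennreal (h c) \<partial>uniform_count_measure {..<n i})"
    using nn_integral_distr[OF measurable_coord_vertices, of "\<lambda>c. ennreal (h c)"] by (simp add: mu_proj)
  also have "\<dots> = (\<Sum>c<n i. ennreal (1 / real (n i)) * ennreal (h c))"
    unfolding uniform_count_measure_def by (subst nn_integral_point_measure_finite) auto
  also have "\<dots> = (\<Sum>c<n i. ennreal (h c / n i))"
    using assms by (intro sum.cong refl) (simp add: ennreal_mult[symmetric])
  also have "\<dots> = ennreal ((\<Sum>c<n i. h c) / n i)"
    using assms n_pos[of i] by (subst sum_ennreal) (auto simp: sum_divide_distrib)
  finally show ?thesis .
qed

lemma emeasure_bind_nu_cyl: "emeasure (\<mu> \<bind> \<nu>) (cyl i T) = emeasure \<mu> (cyl i T)"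
proof -
  have "emeasure (\<mu> \<bind> \<nu>) (cyl i T) = (\<integral>\<^sup>+x. emeasure (\<nu> x) (cyl i T) \<partial>\<mu>)"
    by (rule emeasure_bind[OF space_mu_nonempty nu_measurable cyl_in_sets])
  also have "\<dots> = (\<integral>\<^sup>+x. ennreal (card (T \<inter> nbrs (n i) (E i) (x i)) / d i) \<partial>\<mu>)"
    by (rule nn_integral_cong) (simp add: emeasure_nu_cyl mu_space)
  also have "\<dots> = ennreal ((\<Sum>c<n i. card (T \<inter> nbrs (n i) (E i) c) / d i) / n i)"
    by (rule nn_integral_coord_fun) simp
  also have "(\<Sum>c<n i. card (T \<inter> nbrs (n i) (E i) c) / d i) = card (T \<inter> {..<n i})"
    using sum_card_Int_nbrs[OF graphs[of i] reg[of i], of T] d_pos[of i]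
    by (simp add: sum_divide_distrib[symmetric] flip: of_nat_sum)
  finally show ?thesis
    using n_pos[of i] by (simp add: emeasure_cyl divide_ennreal ennreal_of_nat_eq_real_of_nat)
qed

lemma bind_nu: "\<mu> \<bind> \<nu> = \<mu>"
proof (rule measure_eqI_generator_eq[OF Int_stable_inv_limit_cyls, where \<Omega>=V and A="\<lambda>_. V"])
  show "sets (\<mu> \<bind> \<nu>) = sigma_sets V (inv_limit_cyls n f)"
    using sets_bind[of \<mu> \<nu> \<mu>, OF _ space_mu_nonempty] sets_nu_eq mu_space sets_mu_eq by simp
  have "V = cyl 0 UNIV" unfolding inv_limit_cyl_def by simp
  then show "range (\<lambda>_. V) \<subseteq> inv_limit_cyls n f" unfolding inv_limit_cyls_def by blast
  show "emeasure (\<mu> \<bind> \<nu>) V \<noteq> \<infinity>"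
    using emeasure_bind_nu_cyl[of 0 UNIV] emeasure_cyl[of 0 UNIV] \<open>V = cyl 0 UNIV\<close> by simp
  fix X assume "X \<in> inv_limit_cyls n f"
  then show "emeasure (\<mu> \<bind> \<nu>) X = emeasure \<mu> X"
    unfolding inv_limit_cyls_def using emeasure_bind_nu_cyl by auto
qed (auto simp: inv_limit_cyls_def inv_limit_cyl_def sets_mu_eq)

lemma nn_integral_stationary:
  "g \<in> borel_measurable \<mu> \<Longrightarrow> (\<integral>\<^sup>+x. (\<integral>\<^sup>+y. g y \<partial>\<nu> x) \<partial>\<mu>) = (\<integral>\<^sup>+x. g x \<partial>\<mu>)"
  using nn_integral_bind[OF _ nu_measurable, of g] by (simp add: bind_nu)

lemma integrable_bounded_mu:
  fixes g :: "(nat \<Rightarrow> nat) \<Rightarrow> real"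
  assumes "g \<in> borel_measurable \<mu>" "\<forall>y\<in>V. \<bar>g y\<bar> \<le> B"
  shows "integrable \<mu> g"
proof -
  interpret prob_space \<mu> by (rule mu_prob)
  show ?thesis using assms mu_space by (intro integrable_const_bound[where B=B] AE_I2) auto
qed

lemma integrable_bounded_nu:
  fixes g :: "(nat \<Rightarrow> nat) \<Rightarrow> real"
  assumes x: "x \<in> V" and "g \<in> borel_measurable \<mu>" "\<forall>y\<in>V. \<bar>g y\<bar> \<le> B"
  shows "integrable (\<nu> x) g"
proof -
  interpret prob_space "\<nu> x" by (rule nu_prob[OF x])
  show ?thesis
    using assms nu_space[OF x] by (intro integrable_const_bound[where B=B] AE_I2) (auto simp: measurable_nu_iff)
qed

lemma abs_limit_op_le:
  fixes g :: "(nat \<Rightarrow> nat) \<Rightarrow> real"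
  assumes x: "x \<in> V" and g: "g \<in> borel_measurable \<mu>" "\<forall>y\<in>V. \<bar>g y\<bar> \<le> B"
  shows "\<bar>limit_op g x\<bar> \<le> B"
proof -
  interpret prob_space "\<nu> x" using nu_prob[OF x] .
  have "\<bar>limit_op g x\<bar> \<le> (\<integral>y. \<bar>g y\<bar> \<partial>\<nu> x)"
    unfolding tower_op_def by (rule integral_abs_bound)
  also have "\<dots> \<le> (\<integral>y. B \<partial>\<nu> x)"
    using g nu_space[OF x] by (intro integral_mono integrable_bounded_nu[OF x]) auto
  finally show ?thesis using prob_space by simp
qed

lemma integral_limit_op:
  fixes p :: "(nat \<Rightarrow> nat) \<Rightarrow> real"
  assumes p: "p \<in> borel_measurable \<mu>" "\<forall>y\<in>V. \<bar>p y\<bar> \<le> B" and nonneg: "\<And>y. 0 \<le> p y"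
  shows "(\<integral>x. limit_op p x \<partial>\<mu>) = (\<integral>x. p x \<partial>\<mu>)"
proof -
  have "integrable \<mu> (limit_op p)"
    using measurable_limit_op[OF p(1)] abs_limit_op_le[OF _ p] by (intro integrable_bounded_mu) auto
  then have "ennreal (\<integral>x. limit_op p x \<partial>\<mu>) = (\<integral>\<^sup>+x. ennreal (limit_op p x) \<partial>\<mu>)"
    using nonneg by (intro nn_integral_eq_integral[symmetric]) (auto simp: tower_op_def)
  also have "\<dots> = (\<integral>\<^sup>+x. (\<integral>\<^sup>+y. ennreal (p y) \<partial>\<nu> x) \<partial>\<mu>)"
  proof (rule nn_integral_cong)
    fix x assume "x \<in> space \<mu>"
    then have x: "x \<in> V" using mu_space by simp
    show "ennreal (limit_op p x) = (\<integral>\<^sup>+y. ennreal (p y) \<partial>\<nu> x)"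
      unfolding tower_op_def using nonneg
      by (intro nn_integral_eq_integral[symmetric] integrable_bounded_nu[OF x p]) auto
  qed
  also have "\<dots> = (\<integral>\<^sup>+x. ennreal (p x) \<partial>\<mu>)"
    by (rule nn_integral_stationary) (use p in measurable)
  also have "\<dots> = ennreal (\<integral>x. p x \<partial>\<mu>)"
    using nonneg by (intro nn_integral_eq_integral integrable_bounded_mu[OF p]) auto
  finally show ?thesis
    using nonneg by (simp add: integral_nonneg tower_op_def)
qed

lemma integral_abs_limit_op_diff_le:
  fixes g h :: "(nat \<Rightarrow> nat) \<Rightarrow> real"
  assumes g: "g \<in> borel_measurable \<mu>" "\<forall>y\<in>V. \<bar>g y\<bar> \<le> B"
      and h: "h \<in> borel_measurable \<mu>" "\<forall>y\<in>V. \<bar>h y\<bar> \<le> B"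
  shows "(\<integral>x. \<bar>limit_op g x - limit_op h x\<bar> \<partial>\<mu>) \<le> (\<integral>x. \<bar>g x - h x\<bar> \<partial>\<mu>)"
proof -
  let ?p = "\<lambda>y. \<bar>g y - h y\<bar>"
  have p: "?p \<in> borel_measurable \<mu>" "\<forall>y\<in>V. \<bar>?p y\<bar> \<le> 2 * B" using g h by (measurable, fastforce)
  have "(\<integral>x. \<bar>limit_op g x - limit_op h x\<bar> \<partial>\<mu>) \<le> (\<integral>x. limit_op ?p x \<partial>\<mu>)"
  proof (rule integral_mono)
    have "\<bar>limit_op g x - limit_op h x\<bar> \<le> 2 * B" if "x \<in> V" for x
      using abs_limit_op_le[OF that g] abs_limit_op_le[OF that h] by linarith
    then show "integrable \<mu> (\<lambda>x. \<bar>limit_op g x - limit_op h x\<bar>)"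
      using measurable_limit_op[OF g(1)] measurable_limit_op[OF h(1)]
      by (intro integrable_bounded_mu[where B="2 * B"]) auto
    show "integrable \<mu> (limit_op ?p)"
      using measurable_limit_op[OF p(1)] abs_limit_op_le[OF _ p] by (intro integrable_bounded_mu) auto
    fix x assume "x \<in> space \<mu>"
    then have x: "x \<in> V" using mu_space by simp
    have "limit_op g x - limit_op h x = (\<integral>y. g y - h y \<partial>\<nu> x)"
      unfolding tower_op_def using integrable_bounded_nu[OF x g] integrable_bounded_nu[OF x h] by simp
    then show "\<bar>limit_op g x - limit_op h x\<bar> \<le> limit_op ?p x"
      by (simp add: integral_abs_bound tower_op_def)
  qed
  also have "\<dots> = (\<integral>x. ?p x \<partial>\<mu>)" by (rule integral_limit_op[OF p]) simp
  finally show ?thesis .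
qed

lemma cyl_approx_sets:
  assumes "X \<in> sets \<mu>" "0 < \<delta>"
  shows "\<exists>j. \<forall>i\<ge>j. \<exists>T. measure \<mu> (sym_diff X (cyl i T)) < \<delta>"
proof -
  interpret eventual_generation \<mu> "inv_limit_cyls n f" "\<lambda>i. range (cyl i)"
  proof (intro eventual_generation.intro eventual_generation_axioms.intro)
    show "finite_measure \<mu>" using mu_prob by (simp add: prob_space_def)
    show "sets \<mu> = sigma_sets (space \<mu>) (inv_limit_cyls n f)" using sets_mu_eq mu_space by simp
    fix X assume "X \<in> inv_limit_cyls n f"
    then obtain j T where "X = cyl j T" unfolding inv_limit_cyls_def by auto
    then show "\<exists>j. \<forall>i\<ge>j. X \<in> range (cyl i)" using inv_limit_cyl_lift by blast
  next
    fix i Y assume "Y \<in> range (cyl i)"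
    then obtain S where "Y = cyl i S" by auto
    then have "space \<mu> - Y = cyl i (- S)" using mu_space by (auto simp: inv_limit_cyl_def)
    then show "space \<mu> - Y \<in> range (cyl i)" by simp
  next
    fix i Y Z assume "Y \<in> range (cyl i)" "Z \<in> range (cyl i)"
    then obtain S T where "Y = cyl i S" "Z = cyl i T" by auto
    then have "Y \<union> Z = cyl i (S \<union> T)" by (auto simp: inv_limit_cyl_def)
    then show "Y \<union> Z \<in> range (cyl i)" by simp
  next
    show "range (cyl i) \<subseteq> sets \<mu>" for i using cyl_in_sets by blast
    have "{} = cyl i {}" for i by (simp add: inv_limit_cyl_def)
    then show "{} \<in> range (cyl i)" for i by blast
  qed
  show ?thesis using approximable_sets[OF assms(1)] assms(2) unfolding approximable_def by blast
qed

definition cyl_approximable :: "((nat \<Rightarrow> nat) \<Rightarrow> real) \<Rightarrow> bool" where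
  "cyl_approximable g \<longleftrightarrow> (\<forall>\<delta>>0. \<exists>j. \<forall>i\<ge>j. \<exists>u. (\<integral>x. \<bar>g x - u (x i)\<bar> \<partial>\<mu>) < \<delta>)"

lemma integrable_coord_fun: "integrable \<mu> (\<lambda>x. (u :: nat \<Rightarrow> real) (x i))"
  using inv_limit_coord_less
  by (intro integrable_bounded_mu[where B="\<Sum>c<n i. \<bar>u c\<bar>"] measurable_coord_fun) (auto intro!: member_le_sum)

lemma cyl_approximable_indicator:
  assumes A: "A \<in> sets \<mu>"
  shows "cyl_approximable (\<lambda>x. indicator A x *\<^sub>R c)"
  unfolding cyl_approximable_def
proof (intro allI impI)
  fix \<delta> :: real assume "0 < \<delta>"
  then obtain j where j: "\<And>i. j \<le> i \<Longrightarrow> \<exists>T. measure \<mu> (sym_diff A (cyl i T)) < \<delta> / (\<bar>c\<bar> + 1)"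
    using cyl_approx_sets[OF A, of "\<delta> / (\<bar>c\<bar> + 1)"] by (auto simp: add_pos_nonneg)
  have "\<exists>u. (\<integral>x. \<bar>indicator A x *\<^sub>R c - u (x i)\<bar> \<partial>\<mu>) < \<delta>" if i: "j \<le> i" for i
  proof -
    obtain T where T: "measure \<mu> (sym_diff A (cyl i T)) < \<delta> / (\<bar>c\<bar> + 1)" using j[OF i] by blast
    have S: "sym_diff A (cyl i T) \<in> sets \<mu>" using A cyl_in_sets by auto
    have "(\<integral>x. \<bar>indicator A x *\<^sub>R c - indicator T (x i) * c\<bar> \<partial>\<mu>) = (\<integral>x. \<bar>c\<bar> * indicator (sym_diff A (cyl i T)) x \<partial>\<mu>)"
      using mu_space by (intro Bochner_Integration.integral_cong) (auto simp: indicator_def inv_limit_cyl_def)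
    also have "\<dots> = \<bar>c\<bar> * measure \<mu> (sym_diff A (cyl i T))"
      using S finite_measure.emeasure_finite[of \<mu>] mu_prob by (simp add: less_top[symmetric] prob_space_def)
    also have "\<dots> \<le> \<bar>c\<bar> * (\<delta> / (\<bar>c\<bar> + 1))" using T by (intro mult_left_mono) auto
    also have "\<dots> < \<delta>" using \<open>0 < \<delta>\<close> by (simp add: field_simps)
    finally show ?thesis by (intro exI[of _ "\<lambda>t. indicator T t * c"])
  qed
  then show "\<exists>j. \<forall>i\<ge>j. \<exists>u. (\<integral>x. \<bar>indicator A x *\<^sub>R c - u (x i)\<bar> \<partial>\<mu>) < \<delta>" by blast
qed

lemma cyl_approximable_add:
  assumes g: "integrable \<mu> g" "cyl_approximable g" and h: "integrable \<mu> h" "cyl_approximable h"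
  shows "cyl_approximable (\<lambda>x. g x + h x)"
  unfolding cyl_approximable_def
proof (intro allI impI)
  fix \<delta> :: real assume "0 < \<delta>"
  then obtain j1 j2 where j1: "\<forall>i\<ge>j1. \<exists>u. (\<integral>x. \<bar>g x - u (x i)\<bar> \<partial>\<mu>) < \<delta> / 2"
    and j2: "\<forall>i\<ge>j2. \<exists>u. (\<integral>x. \<bar>h x - u (x i)\<bar> \<partial>\<mu>) < \<delta> / 2"
    using g(2) h(2) unfolding cyl_approximable_def by (meson half_gt_zero)
  have "\<exists>u. (\<integral>x. \<bar>g x + h x - u (x i)\<bar> \<partial>\<mu>) < \<delta>" if i: "max j1 j2 \<le> i" for i
  proof -
    obtain u1 where u1: "(\<integral>x. \<bar>g x - u1 (x i)\<bar> \<partial>\<mu>) < \<delta> / 2" using j1 i by auto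
    obtain u2 where u2: "(\<integral>x. \<bar>h x - u2 (x i)\<bar> \<partial>\<mu>) < \<delta> / 2" using j2 i by auto
    have "(\<integral>x. \<bar>g x + h x - (u1 (x i) + u2 (x i))\<bar> \<partial>\<mu>) \<le> (\<integral>x. \<bar>g x - u1 (x i)\<bar> + \<bar>h x - u2 (x i)\<bar> \<partial>\<mu>)"
      using g h integrable_coord_fun by (intro integral_mono) auto
    also have "\<dots> = (\<integral>x. \<bar>g x - u1 (x i)\<bar> \<partial>\<mu>) + (\<integral>x. \<bar>h x - u2 (x i)\<bar> \<partial>\<mu>)"
      using g h integrable_coord_fun by (intro Bochner_Integration.integral_add) auto
    finally show ?thesis using u1 u2 by (intro exI[of _ "\<lambda>c. u1 c + u2 c"]) simp
  qed
  then show "\<exists>j. \<forall>i\<ge>j. \<exists>u. (\<integral>x. \<bar>g x + h x - u (x i)\<bar> \<partial>\<mu>) < \<delta>" by blast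
qed

lemma cyl_approximable_L1_limit:
  assumes g: "integrable \<mu> g" and s: "\<And>m. integrable \<mu> (s m)" "\<And>m. cyl_approximable (s m)"
    and lim: "(\<lambda>m. \<integral>x. \<bar>g x - s m x\<bar> \<partial>\<mu>) \<longlonglongrightarrow> 0"
  shows "cyl_approximable g"
  unfolding cyl_approximable_def
proof (intro allI impI)
  fix \<delta> :: real assume "0 < \<delta>"
  then obtain m where m: "(\<integral>x. \<bar>g x - s m x\<bar> \<partial>\<mu>) < \<delta> / 2"
    using order_tendstoD(2)[OF lim, of "\<delta> / 2"] by (auto simp: eventually_sequentially)
  obtain j where j: "\<forall>i\<ge>j. \<exists>u. (\<integral>x. \<bar>s m x - u (x i)\<bar> \<partial>\<mu>) < \<delta> / 2"
    using s(2)[of m] \<open>0 < \<delta>\<close> unfolding cyl_approximable_def by (meson half_gt_zero)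
  have "\<exists>u. (\<integral>x. \<bar>g x - u (x i)\<bar> \<partial>\<mu>) < \<delta>" if i: "j \<le> i" for i
  proof -
    obtain u where u: "(\<integral>x. \<bar>s m x - u (x i)\<bar> \<partial>\<mu>) < \<delta> / 2" using j i by blast
    have "(\<integral>x. \<bar>g x - u (x i)\<bar> \<partial>\<mu>) \<le> (\<integral>x. \<bar>g x - s m x\<bar> \<partial>\<mu>) + (\<integral>x. \<bar>s m x - u (x i)\<bar> \<partial>\<mu>)"
      by (rule integral_abs_diff_triangle[OF g s(1) integrable_coord_fun])
    then show ?thesis using m u by (intro exI[of _ u]) simp
  qed
  then show "\<exists>j. \<forall>i\<ge>j. \<exists>u. (\<integral>x. \<bar>g x - u (x i)\<bar> \<partial>\<mu>) < \<delta>" by blast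
qed

text \<open>A form of the martingale convergence theorem for the filtration of the inverse limit.\<close>

lemma cyl_approximable_integrable: "integrable \<mu> g \<Longrightarrow> cyl_approximable g"
proof (induction rule: integrable_induct)
  case (base A c)
  show ?case by (rule cyl_approximable_indicator[OF base(1)])
next
  case (add g h)
  then show ?case by (intro cyl_approximable_add)
next
  case (lim g s)
  note g = \<open>integrable \<mu> g\<close> and s = \<open>\<And>i. integrable \<mu> (s i)\<close>
  note conv = \<open>\<And>x. x \<in> space \<mu> \<Longrightarrow> (\<lambda>i. s i x) \<longlonglongrightarrow> g x\<close>
    and bound = \<open>\<And>i x. x \<in> space \<mu> \<Longrightarrow> norm (s i x) \<le> 2 * norm (g x)\<close>
  have "(\<lambda>m. \<integral>x. \<bar>g x - s m x\<bar> \<partial>\<mu>) \<longlonglongrightarrow> (\<integral>x. 0 \<partial>\<mu>)"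
  proof (rule integral_dominated_convergence[where w="\<lambda>x. 3 * \<bar>g x\<bar>"])
    show "AE x in \<mu>. (\<lambda>m. \<bar>g x - s m x\<bar>) \<longlonglongrightarrow> 0"
    proof (rule AE_I2)
      fix x assume "x \<in> space \<mu>"
      from tendsto_rabs[OF tendsto_diff[OF tendsto_const conv[OF this]], of "g x"]
      show "(\<lambda>m. \<bar>g x - s m x\<bar>) \<longlonglongrightarrow> 0" by simp
    qed
    show "AE x in \<mu>. norm \<bar>g x - s m x\<bar> \<le> 3 * \<bar>g x\<bar>" for m
      using bound[of _ m] by (intro AE_I2) fastforce
    show "(\<lambda>x. \<bar>g x - s m x\<bar>) \<in> borel_measurable \<mu>" for m using g s[of m] by measurable
    show "integrable \<mu> (\<lambda>x. 3 * \<bar>g x\<bar>)" using g by simp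
  qed simp
  then show ?case
    by (intro cyl_approximable_L1_limit[OF g s] \<open>\<And>i. cyl_approximable (s i)\<close>) simp
qed

lemma bounded_cyl_approx:
  fixes v :: "(nat \<Rightarrow> nat) \<Rightarrow> real"
  assumes v: "v \<in> borel_measurable \<mu>" "\<forall>x\<in>V. \<bar>v x\<bar> \<le> 1" and "0 < \<delta>"
  shows "\<exists>j. \<forall>i\<ge>j. \<exists>u. (\<forall>c. \<bar>u c\<bar> \<le> 1) \<and> (\<integral>x. \<bar>v x - u (x i)\<bar> \<partial>\<mu>) < \<delta>"
proof -
  have v_int: "integrable \<mu> v" by (rule integrable_bounded_mu[OF v])
  then obtain j where j: "\<forall>i\<ge>j. \<exists>u. (\<integral>x. \<bar>v x - u (x i)\<bar> \<partial>\<mu>) < \<delta>"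
    using cyl_approximable_integrable \<open>0 < \<delta>\<close> unfolding cyl_approximable_def by blast
  have "\<exists>u. (\<forall>c. \<bar>u c\<bar> \<le> 1) \<and> (\<integral>x. \<bar>v x - u (x i)\<bar> \<partial>\<mu>) < \<delta>" if i: "j \<le> i" for i
  proof -
    obtain u where u: "(\<integral>x. \<bar>v x - u (x i)\<bar> \<partial>\<mu>) < \<delta>" using j i by auto
    define w where "w c = max (-1) (min 1 (u c))" for c
    have "(\<integral>x. \<bar>v x - w (x i)\<bar> \<partial>\<mu>) \<le> (\<integral>x. \<bar>v x - u (x i)\<bar> \<partial>\<mu>)"
    proof (rule integral_mono)
      show "integrable \<mu> (\<lambda>x. \<bar>v x - w (x i)\<bar>)" "integrable \<mu> (\<lambda>x. \<bar>v x - u (x i)\<bar>)"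
        by (intro integrable_abs Bochner_Integration.integrable_diff v_int integrable_coord_fun)+
      show "\<bar>v x - w (x i)\<bar> \<le> \<bar>v x - u (x i)\<bar>" if "x \<in> space \<mu>" for x
        using v that mu_space unfolding w_def by auto
    qed
    moreover have "\<forall>c. \<bar>w c\<bar> \<le> 1" unfolding w_def by auto
    ultimately show ?thesis using u by (intro exI[of _ w]) auto
  qed
  then show ?thesis by blast
qed

abbreviation "vertex_measure i \<equiv> uniform_count_measure {..<n i}"

lemma prob_space_vertex_measure: "prob_space (vertex_measure i)"
  using n_pos[of i] by (intro prob_space_uniform_count_measure) auto

lemma S_graph_Rprob_cube:
  assumes "P \<in> S_k (vertex_measure i) (graph_op i) k"
  shows "Rprob k P" "measure P (cube k) = 1"
  using S_k_Rprob_cube[OF prob_space_vertex_measure assms]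
    abs_adj_op_le_1[OF graphs reg d_pos] measurable_uniform_count_measure
  by (auto simp: space_uniform_count_measure)

lemma S_limit_Rprob_cube:
  assumes "P \<in> S_k \<mu> limit_op k"
  shows "Rprob k P" "measure P (cube k) = 1"
  using S_k_Rprob_cube[OF mu_prob assms] measurable_limit_op abs_limit_op_le mu_space by auto

lemma distr_profile_coord_fun:
  "distr \<mu> (Rspace k) (profile k (\<lambda>j x. u j (x i)) limit_op)
     = distr (vertex_measure i) (Rspace k) (profile k u (graph_op i))"
proof -
  have "distr \<mu> (Rspace k) (profile k (\<lambda>j x. u j (x i)) limit_op)
      = distr \<mu> (Rspace k) (profile k u (graph_op i) \<circ> (\<lambda>x. x i))"
    using mu_space limit_op_coord_fun by (intro distr_cong) (auto simp: profile_def)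
  also have "\<dots> = distr (distr \<mu> (count_space {..<n i}) (\<lambda>x. x i)) (Rspace k) (profile k u (graph_op i))"
    by (rule distr_distr[symmetric, OF _ measurable_coord_vertices])
       (simp add: measurable_count_space_eq1 profile_in_space)
  finally show ?thesis by (simp add: mu_proj)
qed

lemma S_graph_subset_S_limit: "S_k (vertex_measure i) (graph_op i) k \<subseteq> S_k \<mu> limit_op k"
proof
  fix P assume "P \<in> S_k (vertex_measure i) (graph_op i) k"
  then obtain u where P: "P = distr (vertex_measure i) (Rspace k) (profile k u (graph_op i))"
    and u: "\<forall>j<k. \<forall>c\<in>{..<n i}. -1 \<le> u j c \<and> u j c \<le> 1"
    unfolding S_k_eq_profiles by (auto simp: space_uniform_count_measure)
  have "\<forall>j<k. (\<lambda>x. u j (x i)) \<in> borel_measurable \<mu> \<and> (\<forall>x\<in>space \<mu>. -1 \<le> u j (x i) \<and> u j (x i) \<le> 1)"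
    using u mu_space inv_limit_coord_less by (auto intro: measurable_coord_fun)
  then show "P \<in> S_k \<mu> limit_op k"
    unfolding P distr_profile_coord_fun[symmetric] S_k_eq_profiles by blast
qed

lemma S_graph_nonempty: "S_k (vertex_measure i) (graph_op i) k \<noteq> {}"
  unfolding S_k_eq_profiles by (auto intro!: measurable_uniform_count_measure)

lemma S_limit_nonempty: "S_k \<mu> limit_op k \<noteq> {}"
  using S_graph_nonempty S_graph_subset_S_limit by blast

lemma integral_abs_profile_diff_le:
  fixes v w :: "nat \<Rightarrow> (nat \<Rightarrow> nat) \<Rightarrow> real"
  assumes v: "\<And>j. j < k \<Longrightarrow> v j \<in> borel_measurable \<mu> \<and> (\<forall>x\<in>V. \<bar>v j x\<bar> \<le> 1)"
      and w: "\<And>j. j < k \<Longrightarrow> w j \<in> borel_measurable \<mu> \<and> (\<forall>x\<in>V. \<bar>w j x\<bar> \<le> 1)"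
      and close: "\<And>j. j < k \<Longrightarrow> (\<integral>x. \<bar>v j x - w j x\<bar> \<partial>\<mu>) \<le> \<delta>"
      and j: "j < 2 * k"
  shows "integrable \<mu> (\<lambda>x. \<bar>profile k v limit_op x j - profile k w limit_op x j\<bar>)"
    and "(\<integral>x. \<bar>profile k v limit_op x j - profile k w limit_op x j\<bar> \<partial>\<mu>) \<le> \<delta>"
proof -
  have "profile k v limit_op \<in> measurable \<mu> (Rspace k)" "profile k w limit_op \<in> measurable \<mu> (Rspace k)"
    using v w measurable_limit_op by (auto intro!: measurable_profile)
  moreover have "\<bar>profile k v limit_op x j - profile k w limit_op x j\<bar> \<le> 2" if "x \<in> V" for x
  proof -
    have "profile k v limit_op x \<in> cube k" "profile k w limit_op x \<in> cube k"
      using v w that abs_limit_op_le[OF that] by (auto intro!: profile_in_cube)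
    then show ?thesis using j unfolding cube_def by fastforce
  qed
  ultimately show "integrable \<mu> (\<lambda>x. \<bar>profile k v limit_op x j - profile k w limit_op x j\<bar>)"
    using measurable_Rspace_component[OF _ j]
    by (intro integrable_bounded_mu[where B=2]) (measurable, auto)
  show "(\<integral>x. \<bar>profile k v limit_op x j - profile k w limit_op x j\<bar> \<partial>\<mu>) \<le> \<delta>"
  proof (cases "j < k")
    case True
    then show ?thesis using close j unfolding profile_def by simp
  next
    case False
    then have j': "j - k < k" using j by simp
    have "(\<integral>x. \<bar>profile k v limit_op x j - profile k w limit_op x j\<bar> \<partial>\<mu>)
        = (\<integral>x. \<bar>limit_op (v (j - k)) x - limit_op (w (j - k)) x\<bar> \<partial>\<mu>)"
      using False j unfolding profile_def by simp
    also have "\<dots> \<le> (\<integral>x. \<bar>v (j - k) x - w (j - k) x\<bar> \<partial>\<mu>)"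
      using v[OF j'] w[OF j'] by (intro integral_abs_limit_op_diff_le) auto
    also have "\<dots> \<le> \<delta>" by (rule close[OF j'])
    finally show ?thesis .
  qed
qed

lemma LP_dist_profiles_le:
  fixes v w :: "nat \<Rightarrow> (nat \<Rightarrow> nat) \<Rightarrow> real"
  assumes v: "\<And>j. j < k \<Longrightarrow> v j \<in> borel_measurable \<mu> \<and> (\<forall>x\<in>V. \<bar>v j x\<bar> \<le> 1)"
      and w: "\<And>j. j < k \<Longrightarrow> w j \<in> borel_measurable \<mu> \<and> (\<forall>x\<in>V. \<bar>w j x\<bar> \<le> 1)"
      and close: "\<And>j. j < k \<Longrightarrow> (\<integral>x. \<bar>v j x - w j x\<bar> \<partial>\<mu>) \<le> \<delta>"
      and r: "0 < r" "2 * k * \<delta> \<le> r\<^sup>2"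
  shows "LP_dist k (distr \<mu> (Rspace k) (profile k v limit_op)) (distr \<mu> (Rspace k) (profile k w limit_op)) \<le> r"
proof -
  let ?F = "profile k v limit_op" and ?G = "profile k w limit_op"
  have F: "?F \<in> measurable \<mu> (Rspace k)" and G: "?G \<in> measurable \<mu> (Rspace k)"
    using v w measurable_limit_op by (auto intro!: measurable_profile)
  note comp_int = integral_abs_profile_diff_le(1)[OF v w close]
    and comp_le = integral_abs_profile_diff_le(2)[OF v w close]
  have sum_int: "integrable \<mu> (\<lambda>x. \<Sum>j<2*k. \<bar>?F x j - ?G x j\<bar>)"
    using comp_int by auto
  have edist_int: "integrable \<mu> (\<lambda>x. edist k (?F x) (?G x))"
    using borel_measurable_edist[OF F G] edist_le_sum_abs edist_nonneg
    by (intro Bochner_Integration.integrable_bound[OF sum_int] AE_I2) (auto simp: sum_nonneg)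
  have "(\<integral>x. edist k (?F x) (?G x) \<partial>\<mu>) \<le> (\<integral>x. (\<Sum>j<2*k. \<bar>?F x j - ?G x j\<bar>) \<partial>\<mu>)"
    by (rule integral_mono[OF edist_int sum_int edist_le_sum_abs])
  also have "\<dots> = (\<Sum>j<2*k. (\<integral>x. \<bar>?F x j - ?G x j\<bar> \<partial>\<mu>))"
    using comp_int by (intro Bochner_Integration.integral_sum) auto
  also have "\<dots> \<le> (\<Sum>j<2*k. \<delta>)" using comp_le by (intro sum_mono) auto
  also have "\<dots> \<le> r\<^sup>2" using r by simp
  finally show ?thesis by (rule LP_dist_distr_le_of_L1[OF mu_prob F G edist_int _ r(1)])
qed

lemma cyl_approx_families:
  fixes v :: "nat \<Rightarrow> (nat \<Rightarrow> nat) \<Rightarrow> real"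
  assumes v: "\<And>j. j < k \<Longrightarrow> v j \<in> borel_measurable \<mu> \<and> (\<forall>x\<in>V. \<bar>v j x\<bar> \<le> 1)" and "0 < \<delta>"
  shows "\<exists>N. \<forall>i\<ge>N. \<exists>u. \<forall>j<k. (\<forall>c. \<bar>u j c\<bar> \<le> 1) \<and> (\<integral>x. \<bar>v j x - u j (x i)\<bar> \<partial>\<mu>) < \<delta>"
proof -
  have "\<forall>j\<in>{..<k}. \<exists>J. \<forall>i\<ge>J. \<exists>u. (\<forall>c. \<bar>u c\<bar> \<le> 1) \<and> (\<integral>x. \<bar>v j x - u (x i)\<bar> \<partial>\<mu>) < \<delta>"
  proof
    fix j assume "j \<in> {..<k}"
    then show "\<exists>J. \<forall>i\<ge>J. \<exists>u. (\<forall>c. \<bar>u c\<bar> \<le> 1) \<and> (\<integral>x. \<bar>v j x - u (x i)\<bar> \<partial>\<mu>) < \<delta>"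
      using bounded_cyl_approx[of "v j" \<delta>] v[of j] \<open>0 < \<delta>\<close> by simp
  qed
  from bchoice[OF this] obtain J where J: "\<And>j i. j < k \<Longrightarrow> J j \<le> i \<Longrightarrow>
      \<exists>u. (\<forall>c. \<bar>u c\<bar> \<le> 1) \<and> (\<integral>x. \<bar>v j x - u (x i)\<bar> \<partial>\<mu>) < \<delta>"
    by auto
  have "\<exists>u. \<forall>j<k. (\<forall>c. \<bar>u j c\<bar> \<le> 1) \<and> (\<integral>x. \<bar>v j x - u j (x i)\<bar> \<partial>\<mu>) < \<delta>"
    if i: "(\<Sum>j<k. J j) \<le> i" for i
  proof -
    have "\<forall>j\<in>{..<k}. \<exists>u. (\<forall>c. \<bar>u c\<bar> \<le> 1) \<and> (\<integral>x. \<bar>v j x - u (x i)\<bar> \<partial>\<mu>) < \<delta>"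
    proof
      fix j assume "j \<in> {..<k}"
      then show "\<exists>u. (\<forall>c. \<bar>u c\<bar> \<le> 1) \<and> (\<integral>x. \<bar>v j x - u (x i)\<bar> \<partial>\<mu>) < \<delta>"
        using J[of j i] i member_le_sum[of j "{..<k}" J] by simp
    qed
    from bchoice[OF this] show ?thesis by auto
  qed
  then show ?thesis by blast
qed

text \<open>Replace the test functions by \<open>L\<^sup>1\<close>-close cylinder functions, then use the contraction property
  and the coupling bound.\<close>

lemma S_limit_approx:
  assumes P: "P \<in> S_k \<mu> limit_op k" and "0 < \<epsilon>"
  shows "\<exists>N. \<forall>i\<ge>N. \<exists>Q\<in>S_k (vertex_measure i) (graph_op i) k. LP_dist k P Q \<le> \<epsilon>"
proof -
  obtain v where P_eq: "P = distr \<mu> (Rspace k) (profile k v limit_op)"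
    and v0: "\<forall>j<k. v j \<in> borel_measurable \<mu> \<and> (\<forall>x\<in>space \<mu>. -1 \<le> v j x \<and> v j x \<le> 1)"
    using P unfolding S_k_eq_profiles by auto
  have v: "v j \<in> borel_measurable \<mu> \<and> (\<forall>x\<in>V. \<bar>v j x\<bar> \<le> 1)" if "j < k" for j
    using v0 that mu_space by (auto simp: abs_le_iff)
  define \<delta> where "\<delta> = \<epsilon>\<^sup>2 / (2 * real k + 1)"
  have \<delta>: "0 < \<delta>" "2 * k * \<delta> \<le> \<epsilon>\<^sup>2" unfolding \<delta>_def using \<open>0 < \<epsilon>\<close> by (simp_all add: field_simps)
  obtain N where N: "\<And>i. N \<le> i \<Longrightarrow> \<exists>u. \<forall>j<k. (\<forall>c. \<bar>u j c\<bar> \<le> 1) \<and> (\<integral>x. \<bar>v j x - u j (x i)\<bar> \<partial>\<mu>) < \<delta>"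
    using cyl_approx_families[where k=k and v=v and \<delta>=\<delta>] v \<delta>(1) by blast
  have "\<exists>Q\<in>S_k (vertex_measure i) (graph_op i) k. LP_dist k P Q \<le> \<epsilon>" if i: "N \<le> i" for i
  proof -
    obtain u where u: "\<And>j. j < k \<Longrightarrow> (\<forall>c. \<bar>u j c\<bar> \<le> 1) \<and> (\<integral>x. \<bar>v j x - u j (x i)\<bar> \<partial>\<mu>) < \<delta>"
      using N[OF i] by blast
    have "distr (vertex_measure i) (Rspace k) (profile k u (graph_op i)) \<in> S_k (vertex_measure i) (graph_op i) k"
      unfolding S_k_eq_profiles using u by (fastforce simp: abs_le_iff intro: measurable_uniform_count_measure)
    moreover have "LP_dist k P (distr \<mu> (Rspace k) (profile k (\<lambda>j x. u j (x i)) limit_op)) \<le> \<epsilon>"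
      unfolding P_eq using u \<delta> \<open>0 < \<epsilon>\<close>
      by (intro LP_dist_profiles_le[OF v]) (auto intro: measurable_coord_fun less_imp_le)
    ultimately show ?thesis unfolding distr_profile_coord_fun by blast
  qed
  then show ?thesis by blast
qed

text \<open>By total boundedness, finitely many profiles of the limit operator serve as an \<open>\<epsilon>/2\<close>-net,
  which makes the approximation uniform.\<close>

lemma S_limit_uniform_approx:
  assumes "0 < \<epsilon>"
  shows "\<exists>N. \<forall>i\<ge>N. \<forall>P\<in>S_k \<mu> limit_op k. \<exists>Q\<in>S_k (vertex_measure i) (graph_op i) k. LP_dist k P Q \<le> \<epsilon>"
proof -
  let ?S = "S_k \<mu> limit_op k" and ?S_graph = "\<lambda>i. S_k (vertex_measure i) (graph_op i) k"
  obtain K and g :: "(nat \<Rightarrow> real) measure \<Rightarrow> (nat \<Rightarrow> nat) \<Rightarrow> int"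
    where K: "finite K" "\<And>P. Rprob k P \<Longrightarrow> g P \<in> K"
    and g: "\<And>P Q. Rprob k P \<Longrightarrow> Rprob k Q \<Longrightarrow> measure P (cube k) = 1 \<Longrightarrow> measure Q (cube k) = 1 \<Longrightarrow>
        g P = g Q \<Longrightarrow> LP_dist k P Q \<le> \<epsilon> / 2"
    using LP_totally_bounded_on_cube[of "\<epsilon> / 2" k] \<open>0 < \<epsilon>\<close> by auto
  have fin: "finite (g ` ?S)" using K S_limit_Rprob_cube by (blast intro: finite_subset)
  define rep where "rep \<kappa> = (SOME P. P \<in> ?S \<and> g P = \<kappa>)" for \<kappa>
  have rep: "rep \<kappa> \<in> ?S \<and> g (rep \<kappa>) = \<kappa>" if "\<kappa> \<in> g ` ?S" for \<kappa>
    unfolding rep_def by (rule someI_ex) (use that in auto)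
  have "\<forall>\<kappa>\<in>g ` ?S. \<exists>N. \<forall>i\<ge>N. \<exists>Q\<in>?S_graph i. LP_dist k (rep \<kappa>) Q \<le> \<epsilon> / 2"
  proof
    fix \<kappa> assume "\<kappa> \<in> g ` ?S"
    then show "\<exists>N. \<forall>i\<ge>N. \<exists>Q\<in>?S_graph i. LP_dist k (rep \<kappa>) Q \<le> \<epsilon> / 2"
      by (rule S_limit_approx[OF conjunct1[OF rep]]) (use \<open>0 < \<epsilon>\<close> in simp)
  qed
  from bchoice[OF this] obtain N
    where N: "\<forall>\<kappa>\<in>g ` ?S. \<forall>i\<ge>N \<kappa>. \<exists>Q\<in>?S_graph i. LP_dist k (rep \<kappa>) Q \<le> \<epsilon> / 2"
    by blast
  have "\<exists>Q\<in>?S_graph i. LP_dist k P Q \<le> \<epsilon>" if i: "(\<Sum>\<kappa>\<in>g ` ?S. N \<kappa>) \<le> i" and P: "P \<in> ?S" for i P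
  proof -
    have \<kappa>: "g P \<in> g ` ?S" using P by simp
    then have "N (g P) \<le> i" using i member_le_sum[OF \<kappa> _ fin, of N] by simp
    then obtain Q where Q: "Q \<in> ?S_graph i" "LP_dist k (rep (g P)) Q \<le> \<epsilon> / 2" using N \<kappa> by blast
    note R = rep[OF \<kappa>]
    have "LP_dist k P (rep (g P)) \<le> \<epsilon> / 2"
      by (rule g[OF S_limit_Rprob_cube(1)[OF P] S_limit_Rprob_cube(1)[OF conjunct1[OF R]]
            S_limit_Rprob_cube(2)[OF P] S_limit_Rprob_cube(2)[OF conjunct1[OF R]]]) (use R in simp)
    then have "LP_dist k P Q \<le> \<epsilon> / 2 + \<epsilon> / 2"
      using LP_dist_triangle[OF S_limit_Rprob_cube(1)[OF P] S_limit_Rprob_cube(1)[OF conjunct1[OF R]]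
          S_graph_Rprob_cube(1)[OF Q(1)]] Q(2) by linarith
    then show ?thesis using Q(1) by auto
  qed
  then show ?thesis by blast
qed

lemma haus_LP_S_graph_S_limit_bounds:
  "0 \<le> haus_LP k (S_k (vertex_measure i) (graph_op i) k) (S_k \<mu> limit_op k)"
  "haus_LP k (S_k (vertex_measure i) (graph_op i) k) (S_k \<mu> limit_op k) \<le> 1"
proof -
  have LP: "0 \<le> LP_dist k P Q \<and> LP_dist k P Q \<le> 1"
    if "P \<in> S_k (vertex_measure i) (graph_op i) k" "Q \<in> S_k \<mu> limit_op k" for P Q
    using S_graph_Rprob_cube(1)[OF that(1)] S_limit_Rprob_cube(1)[OF that(2)]
    by (simp add: LP_dist_nonneg LP_dist_le_1)
  obtain P0 Q0 where P0: "P0 \<in> S_k (vertex_measure i) (graph_op i) k" and Q0: "Q0 \<in> S_k \<mu> limit_op k"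
    using S_graph_nonempty S_limit_nonempty by blast
  show "0 \<le> haus_LP k (S_k (vertex_measure i) (graph_op i) k) (S_k \<mu> limit_op k)"
    using LP by (intro haus_LP_nonneg[OF S_graph_nonempty S_limit_nonempty])
  show "haus_LP k (S_k (vertex_measure i) (graph_op i) k) (S_k \<mu> limit_op k) \<le> 1"
  proof (rule haus_LP_le[OF S_graph_nonempty S_limit_nonempty])
    show "0 \<le> LP_dist k P Q" if "P \<in> S_k (vertex_measure i) (graph_op i) k" "Q \<in> S_k \<mu> limit_op k" for P Q
      using LP[OF that] by simp
    show "\<exists>Q\<in>S_k \<mu> limit_op k. LP_dist k P Q \<le> 1" if "P \<in> S_k (vertex_measure i) (graph_op i) k" for P
      using LP[OF that Q0] Q0 by blast
    show "\<exists>P\<in>S_k (vertex_measure i) (graph_op i) k. LP_dist k P Q \<le> 1" if "Q \<in> S_k \<mu> limit_op k" for Q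
      using LP[OF P0 that] P0 by blast
  qed
qed

lemma haus_LP_S_graph_S_limit_le:
  assumes "0 < \<epsilon>"
  shows "\<exists>N. \<forall>i\<ge>N. haus_LP k (S_k (vertex_measure i) (graph_op i) k) (S_k \<mu> limit_op k) \<le> \<epsilon>"
proof -
  obtain N where N: "\<forall>i\<ge>N. \<forall>P\<in>S_k \<mu> limit_op k. \<exists>Q\<in>S_k (vertex_measure i) (graph_op i) k. LP_dist k P Q \<le> \<epsilon>"
    using S_limit_uniform_approx[OF assms] by blast
  have "haus_LP k (S_k (vertex_measure i) (graph_op i) k) (S_k \<mu> limit_op k) \<le> \<epsilon>" if "N \<le> i" for i
  proof (rule haus_LP_le[OF S_graph_nonempty S_limit_nonempty])
    show "0 \<le> LP_dist k P Q" if "P \<in> S_k (vertex_measure i) (graph_op i) k" "Q \<in> S_k \<mu> limit_op k" for P Q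
      by (rule LP_dist_nonneg[OF S_graph_Rprob_cube(1)[OF that(1)] S_limit_Rprob_cube(1)[OF that(2)]])
    show "\<exists>Q\<in>S_k \<mu> limit_op k. LP_dist k P Q \<le> \<epsilon>" if "P \<in> S_k (vertex_measure i) (graph_op i) k" for P
      using that S_graph_subset_S_limit LP_dist_self[OF S_graph_Rprob_cube(1)[OF that]] \<open>0 < \<epsilon>\<close>
      by (intro bexI[of _ P]) (simp_all add: subset_iff)
    show "\<exists>P\<in>S_k (vertex_measure i) (graph_op i) k. LP_dist k P Q \<le> \<epsilon>" if Q: "Q \<in> S_k \<mu> limit_op k" for Q
    proof -
      obtain P where "P \<in> S_k (vertex_measure i) (graph_op i) k" "LP_dist k Q P \<le> \<epsilon>"
        using N \<open>N \<le> i\<close> Q by blast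
      then show ?thesis by (intro bexI[of _ P]) (simp_all add: LP_dist_commute)
    qed
  qed
  then show ?thesis by blast
qed

lemma action_convergent_graph_ops: "action_convergent vertex_measure graph_op"
  unfolding action_convergent_def
proof (intro allI impI)
  fix k :: nat and e :: real assume "0 < e"
  obtain N where N: "\<forall>i\<ge>N. \<forall>P\<in>S_k \<mu> limit_op k. \<exists>Q\<in>S_k (vertex_measure i) (graph_op i) k. LP_dist k P Q \<le> e / 2"
    using S_limit_uniform_approx[of "e / 2" k] \<open>0 < e\<close> by auto
  have "haus_LP k (S_k (vertex_measure p) (graph_op p) k) (S_k (vertex_measure q) (graph_op q) k) \<le> e / 2"
    if "N \<le> p" "N \<le> q" for p q
  proof (rule haus_LP_le[OF S_graph_nonempty S_graph_nonempty])
    show "0 \<le> LP_dist k P Q"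
      if "P \<in> S_k (vertex_measure p) (graph_op p) k" "Q \<in> S_k (vertex_measure q) (graph_op q) k" for P Q
      by (rule LP_dist_nonneg[OF S_graph_Rprob_cube(1)[OF that(1)] S_graph_Rprob_cube(1)[OF that(2)]])
    show "\<exists>Q\<in>S_k (vertex_measure q) (graph_op q) k. LP_dist k P Q \<le> e / 2"
      if "P \<in> S_k (vertex_measure p) (graph_op p) k" for P
      using N \<open>N \<le> q\<close> that S_graph_subset_S_limit by blast
    show "\<exists>P\<in>S_k (vertex_measure p) (graph_op p) k. LP_dist k P Q \<le> e / 2"
      if Q: "Q \<in> S_k (vertex_measure q) (graph_op q) k" for Q
    proof -
      obtain P where "P \<in> S_k (vertex_measure p) (graph_op p) k" "LP_dist k Q P \<le> e / 2"
        using N \<open>N \<le> p\<close> Q S_graph_subset_S_limit by blast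
      then show ?thesis by (intro bexI[of _ P]) (simp_all add: LP_dist_commute)
    qed
  qed
  then show "\<exists>N. \<forall>p\<ge>N. \<forall>q\<ge>N. haus_LP k (S_k (vertex_measure p) (graph_op p) k)
      (S_k (vertex_measure q) (graph_op q) k) < e"
    using \<open>0 < e\<close> by (intro exI[of _ N]) (auto intro: le_less_trans[of _ "e / 2"])
qed

text \<open>Each term of the series defining \<open>d\<^sub>M\<close> tends to \<open>0\<close> and is dominated by \<open>2\<^sup>-\<^sup>k\<close>, so Tannery's
  theorem applies.\<close>

lemma d_M_graph_ops_tendsto_0: "(\<lambda>i. d_M (vertex_measure i) (graph_op i) \<mu> limit_op) \<longlonglongrightarrow> 0"
proof -
  define h where "h k i = haus_LP (Suc k) (S_k (vertex_measure i) (graph_op i) (Suc k)) (S_k \<mu> limit_op (Suc k))"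
    for k i
  have "(\<lambda>i. h k i) \<longlonglongrightarrow> 0" for k
  proof (rule LIMSEQ_I)
    fix r :: real assume "0 < r"
    then obtain N where "\<forall>i\<ge>N. h k i \<le> r / 2"
      using haus_LP_S_graph_S_limit_le[of "r / 2" "Suc k"] unfolding h_def by auto
    then show "\<exists>N. \<forall>i\<ge>N. norm (h k i - 0) < r"
      using haus_LP_S_graph_S_limit_bounds(1) \<open>0 < r\<close> unfolding h_def by (intro exI[of _ N]) force
  qed
  then have "(\<lambda>i. (1/2) ^ Suc k * h k i) \<longlonglongrightarrow> 0" for k by (intro tendsto_mult_right_zero)
  moreover have "\<forall>\<^sub>F (k, i) in at_top \<times>\<^sub>F sequentially. norm ((1/2::real) ^ Suc k * h k i) \<le> (1/2) ^ Suc k"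
    using haus_LP_S_graph_S_limit_bounds unfolding h_def by (intro always_eventually) (auto simp: mult_left_le)
  ultimately have "(\<lambda>i. \<Sum>k. (1/2::real) ^ Suc k * h k i) \<longlonglongrightarrow> (\<Sum>k. 0::real)"
    using tannerys_theorem[of "\<lambda>k i. (1/2) ^ Suc k * h k i" "\<lambda>_. 0" sequentially "\<lambda>k. (1/2) ^ Suc k"] by auto
  then show ?thesis unfolding d_M_def h_def by simp
qed

end

theorem theorem12p4:
  fixes n :: "nat \<Rightarrow> nat" and E :: "nat \<Rightarrow> nat \<Rightarrow> nat \<Rightarrow> bool"
    and f :: "nat \<Rightarrow> nat \<Rightarrow> nat" and a b d :: "nat \<Rightarrow> nat"
    and \<mu> :: "(nat \<Rightarrow> nat) measure"
    and \<nu> :: "(nat \<Rightarrow> nat) \<Rightarrow> (nat \<Rightarrow> nat) measure"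
  assumes n_pos: "\<And>i. 0 < n i"
    and graphs: "\<And>i. fin_graph (n i) (E i)"
    and tower: "\<And>i. uniform_map (n i) (E i) (n (Suc i)) (E (Suc i)) (f i) (a i) (b i)"
    and reg: "\<And>i. regular (n i) (E i) (d i)"
    and d_pos: "\<And>i. 0 < d i"
    and mu_prob: "prob_space \<mu>"
    and mu_sets: "sets \<mu> = sets (inv_limit_borel n f)"
    and mu_space: "space \<mu> = inv_limit n f"
    and mu_proj: "\<And>i. distr \<mu> (count_space {..<n i}) (\<lambda>x. x i) = uniform_count_measure {..<n i}"
    and nu_prob: "\<And>x. x \<in> inv_limit n f \<Longrightarrow> prob_space (\<nu> x)"
    and nu_sets: "\<And>x. x \<in> inv_limit n f \<Longrightarrow> sets (\<nu> x) = sets (inv_limit_borel n f)"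
    and nu_space: "\<And>x. x \<in> inv_limit n f \<Longrightarrow> space (\<nu> x) = inv_limit n f"
    and nu_supp: "\<And>x. x \<in> inv_limit n f \<Longrightarrow> emeasure (\<nu> x) (inv_limit_nbrs n E f x) = 1"
    and nu_proj: "\<And>x i. x \<in> inv_limit n f \<Longrightarrow>
       distr (\<nu> x) (count_space {..<n i}) (\<lambda>y. y i) = uniform_measure (count_space {..<n i}) (nbrs (n i) (E i) (x i))"
  shows "(\<forall>i. P_operator (uniform_count_measure {..<n i}) (adj_op (n i) (E i) (d i)))
       \<and> action_convergent (\<lambda>i. uniform_count_measure {..<n i}) (\<lambda>i. adj_op (n i) (E i) (d i))
       \<and> (\<lambda>i. d_M (uniform_count_measure {..<n i}) (adj_op (n i) (E i) (d i)) \<mu> (tower_op \<nu>))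
            \<longlonglongrightarrow> 0"
proof -
  interpret graph_tower_limit n E f d \<mu> \<nu>
    by (rule graph_tower_limit.intro)
       (fact n_pos graphs reg d_pos mu_prob mu_sets mu_space mu_proj nu_prob nu_sets nu_space nu_proj)+
  show ?thesis
    using P_operator_adj_op[OF graphs reg d_pos n_pos] action_convergent_graph_ops d_M_graph_ops_tendsto_0
    by blast
qed

end
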